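(* Let $\mathbf A\in\mathbb R^{n\times n}$. The following are equivalent: (1) $\mathbf A$ has the signature equality property; (2) $\mathbf A$ is eventually SJS, i.e. there is a positive integer $k_0$ such that $\mathbf A^k$ is SJS for all $k\ge k_0$; (3) there is a positive integer $k$ such that both $\mathbf A^k$ and $\mathbf A^{k+1}$ are SJS.
   Context: For $J\subseteq[n]=\{1,\dots,n\}$ with $J^c=[n]\setminus J$, a real matrix $\mathbf B=\{b_{ij}\}$ is strictly $J$-sign-symmetric if $b_{ij}>0$ for $(i,j)\in (J\times J)\cup(J^c\times J^c)$ and $b_{ij}<0$ for $(i,j)\in(J\times J^c)\cup(J^c\times J)$; $\mathbf B$ is SJS if it is strictly $J$-sign-symmetric for some $J\subseteq[n]$. An eigenfunctional of $\mathbf A$ for eigenvalue $\lambda$ is an eigenvector of $\mathbf A^T$ for $\lambda$. For $x\in\mathbb R^n$, $\mathrm{Sign}(x)=(\mathrm{sgn}(x^1),\dots,\mathrm{sgn}(x^n))^T$. $\mathbf A$ has the signature equality property if (i) $\mathbf A$ has a simple positive eigenvalue $\lambda>0$ with $\lambda>|\mu|$ for every other eigenvalue $\mu$ of $\mathbf A$, and (ii) the corresponding eigenvector $x$ and eigenfunctional $x^*$ have no zero coordinates and can be chosen with $\mathrm{Sign}(x)=\mathrm{Sign}(x^* )$. *)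

theory Defs
  imports "Jordan_Normal_Form.Jordan_Normal_Form"
begin

text \<open>Indices are 0-based: [n] is rendered as {0..<n}.\<close>

definition strictly_J_sign_symmetric :: "nat \<Rightarrow> nat set \<Rightarrow> real mat \<Rightarrow> bool" where
  "strictly_J_sign_symmetric n J B \<longleftrightarrow> J \<subseteq> {0..<n} \<and>
     (\<forall>i<n. \<forall>j<n. ((i \<in> J) = (j \<in> J) \<longrightarrow> B $$ (i,j) > 0) \<and>
                   ((i \<in> J) \<noteq> (j \<in> J) \<longrightarrow> B $$ (i,j) < 0))"

definition SJS :: "nat \<Rightarrow> real mat \<Rightarrow> bool" where
  "SJS n B \<longleftrightarrow> (\<exists>J. strictly_J_sign_symmetric n J B)"

definition eventually_SJS :: "nat \<Rightarrow> real mat \<Rightarrow> bool" where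
  "eventually_SJS n A \<longleftrightarrow> (\<exists>k0>0. \<forall>k\<ge>k0. SJS n (A ^\<^sub>m k))"

definition signature_equality :: "nat \<Rightarrow> real mat \<Rightarrow> bool" where
  "signature_equality n A \<longleftrightarrow> (\<exists>lam::real. lam > 0 \<and>
     order lam (char_poly A) = 1 \<and>
     (\<forall>\<mu>. eigenvalue (map_mat complex_of_real A) \<mu> \<and> \<mu> \<noteq> complex_of_real lam
          \<longrightarrow> cmod \<mu> < lam) \<and>
     (\<exists>x y. x \<in> carrier_vec n \<and> y \<in> carrier_vec n \<and>
        A *\<^sub>v x = lam \<cdot>\<^sub>v x \<and> transpose_mat A *\<^sub>v y = lam \<cdot>\<^sub>v y \<and>
        (\<forall>i<n. x $ i \<noteq> 0 \<and> y $ i \<noteq> 0 \<and> sgn (x $ i) = sgn (y $ i))))"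

end

theory Submission
  imports Defs "Jordan_Normal_Form.Jordan_Normal_Form_Uniqueness" "Jordan_Normal_Form.Spectral_Radius"
begin

text \<open>(1) \<open>\<Longrightarrow>\<close> (2): with the spectral projector \<open>P = x y\<^sup>T / (y\<^sup>T x)\<close> of the dominant
  eigenvalue \<open>\<lambda>\<close> and \<open>N = A - \<lambda> P\<close> one has \<open>P N = N P = 0\<close>, hence
  \<open>A ^ k = \<lambda> ^ k P + N ^ k\<close>, and every eigenvalue of \<open>N\<close> is smaller than \<open>\<lambda>\<close> in modulus.
  Since \<open>x\<close> and \<open>y\<close> have the same signs, \<open>P\<close> is strictly \<open>J\<close>-sign-symmetric for
  \<open>J = {i. x\<^sub>i > 0}\<close>, and the perturbation \<open>N ^ k = o(\<lambda> ^ k)\<close> eventually cannot change a sign.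

  (3) \<open>\<Longrightarrow>\<close> (1): conjugation by the signature matrix of \<open>J\<close> turns an SJS matrix into a
  positive one, so Perron's theorem (proved below from the Collatz--Wielandt bound and the growth
  of matrix powers) applies to \<open>A ^ k\<close>, \<open>A ^ (k + 1)\<close> and their transposes. As \<open>A\<close> commutes
  with its powers, the Perron vectors \<open>x\<close> of \<open>A ^ k\<close> and \<open>y\<close> of \<open>(A ^ k)\<^sup>T\<close>, which share the sign
  pattern \<open>J\<close>, are eigenvectors of \<open>A\<close> and \<open>A\<^sup>T\<close> for one eigenvalue \<open>c\<close> with \<open>c ^ k\<close> the
  Perron root of \<open>A ^ k\<close>; comparison with \<open>A ^ (k + 1)\<close> gives \<open>c > 0\<close>. Dominance and geometric
  simplicity of \<open>c\<close> are inherited from \<open>c ^ k\<close>, and \<open>y \<bullet> x > 0\<close> rules out a Jordan chain.\<close>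

lemma index_mult_mat_vec_sum:
  assumes "A \<in> carrier_mat n m" "v \<in> carrier_vec m" "i < n"
  shows "(A *\<^sub>v v) $ i = (\<Sum>j<m. A $$ (i,j) * v $ j)"
  using assms by (auto simp: scalar_prod_def atLeast0LessThan intro!: sum.cong)

lemma index_mult_mat_sum:
  assumes "A \<in> carrier_mat n m" "B \<in> carrier_mat m k" "i < n" "j < k"
  shows "(A * B) $$ (i,j) = (\<Sum>l<m. A $$ (i,l) * B $$ (l,j))"
  using assms by (auto simp: scalar_prod_def atLeast0LessThan intro!: sum.cong)

lemma smult_mat_mult_vec:
  assumes "A \<in> carrier_mat n n" "v \<in> carrier_vec n"
  shows "(c \<cdot>\<^sub>m A) *\<^sub>v v = c \<cdot>\<^sub>v (A *\<^sub>v v)"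
  using assms by (intro eq_vecI) (auto simp: scalar_prod_def sum_distrib_left mult.assoc)

lemma pow_smult_mat:
  fixes A :: "'a::comm_ring_1 mat"
  assumes A: "A \<in> carrier_mat n n"
  shows "(c \<cdot>\<^sub>m A) ^\<^sub>m k = c ^ k \<cdot>\<^sub>m A ^\<^sub>m k"
proof (induct k)
  case (Suc k)
  have "(c \<cdot>\<^sub>m A) ^\<^sub>m Suc k = (c ^ k \<cdot>\<^sub>m A ^\<^sub>m k) * (c \<cdot>\<^sub>m A)"
    using Suc by simp
  also have "\<dots> = c \<cdot>\<^sub>m (c ^ k \<cdot>\<^sub>m (A ^\<^sub>m k * A))"
    using A by (simp add: mult_smult_assoc_mat[of _ n n _ n] mult_smult_distrib[of _ n n _ n])
  also have "\<dots> = c ^ Suc k \<cdot>\<^sub>m A ^\<^sub>m Suc k"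
    by (auto intro!: eq_matI simp: mult.commute mult.left_commute)
  finally show ?case .
qed auto

lemma pow_mat_commute:
  fixes A :: "'a::semiring_1 mat"
  assumes A: "A \<in> carrier_mat n n"
  shows "A * A ^\<^sub>m k = A ^\<^sub>m k * A"
proof (induct k)
  case (Suc k)
  have "A * A ^\<^sub>m Suc k = (A * A ^\<^sub>m k) * A"
    using assoc_mult_mat[OF A pow_carrier_mat[OF A] A] by simp
  then show ?case unfolding Suc by simp
qed (use A in simp)

lemma smult_vec_right_cancel:
  fixes a b :: "'a::idom"
  assumes x: "x \<in> carrier_vec n" "x \<noteq> 0\<^sub>v n" and eq: "a \<cdot>\<^sub>v x = b \<cdot>\<^sub>v x"
  shows "a = b"
proof -
  obtain i where "i < n" "x $ i \<noteq> 0" using x by (metis carrier_vecD eq_vecI index_zero_vec)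
  with arg_cong[OF eq, of "\<lambda>v. v $ i"] x show ?thesis by simp
qed

lemma of_real_mult_mat_vec_eigen:
  assumes "B \<in> carrier_mat n n" "w \<in> carrier_vec n" "B *\<^sub>v w = e \<cdot>\<^sub>v w"
  shows "map_mat complex_of_real B *\<^sub>v map_vec complex_of_real w
           = complex_of_real e \<cdot>\<^sub>v map_vec complex_of_real w"
  using of_real_hom.mult_mat_vec_hom[OF assms(1,2), symmetric] assms(3)
  by (simp add: of_real_hom.vec_hom_smult)

lemma of_real_vec_eq_zero_iff:
  "map_vec complex_of_real w = 0\<^sub>v n \<longleftrightarrow> w = 0\<^sub>v n"
  by (auto simp: vec_eq_iff)

section \<open>Growth of matrix powers\<close>

lemma eigenvalues_below_smaller_bound:
  fixes M :: "complex mat"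
  assumes M: "M \<in> carrier_mat n n" and s: "s > 0"
    and ev: "\<And>\<mu>. eigenvalue M \<mu> \<Longrightarrow> cmod \<mu> < s"
  obtains t where "0 < t" "t < s" "\<And>\<mu>. eigenvalue M \<mu> \<Longrightarrow> cmod \<mu> < t"
proof -
  define m where "m = Max (insert 0 (cmod ` spectrum M))"
  have fin: "finite (insert 0 (cmod ` spectrum M))"
    using card_finite_spectrum(1)[OF M] by simp
  have m_ge: "cmod \<mu> \<le> m" if "eigenvalue M \<mu>" for \<mu>
    unfolding m_def using fin that by (intro Max_ge) (auto simp: spectrum_def)
  have "m \<in> insert 0 (cmod ` spectrum M)" unfolding m_def using fin by (intro Max_in) auto
  hence "0 \<le> m" "m < s" using s ev by (auto simp: spectrum_def m_ge)
  moreover have "cmod \<mu> < (m + s) / 2" if "eigenvalue M \<mu>" for \<mu>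
    using m_ge[OF that] \<open>m < s\<close> by simp
  ultimately show ?thesis using s by (intro that[of "(m + s) / 2"]) auto
qed

lemma complex_mat_pow_norm_bound:
  fixes M :: "complex mat"
  assumes M: "M \<in> carrier_mat n n" and t: "t > 0"
    and ev: "\<And>\<mu>. eigenvalue M \<mu> \<Longrightarrow> cmod \<mu> < t"
  shows "\<exists>C. \<forall>m. norm_bound (M ^\<^sub>m m) (C * t ^ m)"
proof (cases "n = 0")
  case True
  then show ?thesis using M unfolding norm_bound_def by auto
next
  case False
  define M' where "M' = complex_of_real (1 / t) \<cdot>\<^sub>m M"
  have M': "M' \<in> carrier_mat n n" using M unfolding M'_def by auto
  have M_eq: "M = complex_of_real t \<cdot>\<^sub>m M'"
    using M t unfolding M'_def by (auto intro!: eq_matI simp flip: of_real_mult)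
  have "cmod \<mu> < 1" if "eigenvalue M' \<mu>" for \<mu>
  proof -
    from that obtain v where "v \<in> carrier_vec n" "v \<noteq> 0\<^sub>v n" "M' *\<^sub>v v = \<mu> \<cdot>\<^sub>v v"
      using M' unfolding eigenvalue_def eigenvector_def by auto
    hence "eigenvalue M (complex_of_real t * \<mu>)"
      using M M' unfolding eigenvalue_def eigenvector_def M_eq
      by (auto simp: smult_mat_mult_vec smult_smult_assoc)
    from ev[OF this] t show ?thesis by (simp add: norm_mult)
  qed
  moreover obtain \<mu> where "spectral_radius M' = cmod \<mu>" "eigenvalue M' \<mu>"
    using spectral_radius_mem_max(1)[OF M'] False by (auto simp: spectrum_def)
  ultimately have "spectral_radius M' < 1" by simp
  from spectral_radius_jnf_norm_bound_less_1_upper_triangular[OF M' this]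
  obtain c where c: "\<And>k. norm_bound (M' ^\<^sub>m k) c" by auto
  have "norm_bound (M ^\<^sub>m m) (c * t ^ m)" for m
    unfolding norm_bound_def
  proof (intro allI impI)
    fix i j assume "i < dim_row (M ^\<^sub>m m)" "j < dim_col (M ^\<^sub>m m)"
    hence ij: "i < n" "j < n" using pow_carrier_mat[OF M, of m] by auto
    have "norm ((M ^\<^sub>m m) $$ (i,j)) = t ^ m * norm ((M' ^\<^sub>m m) $$ (i,j))"
      unfolding M_eq pow_smult_mat[OF M'] using ij M' t by (simp add: norm_mult norm_power)
    also have "\<dots> \<le> t ^ m * c" using c[of m] ij M' t unfolding norm_bound_def
      by (intro mult_left_mono) auto
    finally show "norm ((M ^\<^sub>m m) $$ (i,j)) \<le> c * t ^ m" by (simp add: mult.commute)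
  qed
  then show ?thesis by blast
qed

lemma real_mat_pow_entry_bound:
  fixes P :: "real mat"
  assumes P: "P \<in> carrier_mat n n" and t: "t > 0"
    and ev: "\<And>\<mu>. eigenvalue (map_mat complex_of_real P) \<mu> \<Longrightarrow> cmod \<mu> < t"
  shows "\<exists>C. \<forall>m i j. i < n \<longrightarrow> j < n \<longrightarrow> \<bar>(P ^\<^sub>m m) $$ (i,j)\<bar> \<le> C * t ^ m"
proof -
  have Pc: "map_mat complex_of_real P \<in> carrier_mat n n" using P by auto
  from complex_mat_pow_norm_bound[OF Pc t ev] obtain C
    where C: "\<And>m. norm_bound (map_mat complex_of_real P ^\<^sub>m m) (C * t ^ m)" by auto
  show ?thesis
  proof (intro exI allI impI)
    fix m i j assume ij: "i < n" "j < n"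
    with C[of m] P show "\<bar>(P ^\<^sub>m m) $$ (i,j)\<bar> \<le> C * t ^ m"
      unfolding norm_bound_def of_real_hom.mat_hom_pow[OF P, symmetric] by auto
  qed
qed

lemma nonneg_mat_pow_nonneg:
  fixes P :: "real mat"
  assumes P: "P \<in> carrier_mat n n" and nonneg: "\<And>i j. i < n \<Longrightarrow> j < n \<Longrightarrow> P $$ (i,j) \<ge> 0"
  shows "i < n \<Longrightarrow> j < n \<Longrightarrow> (P ^\<^sub>m m) $$ (i,j) \<ge> 0"
proof (induct m arbitrary: i j)
  case (Suc m)
  have "(P ^\<^sub>m Suc m) $$ (i,j) = (\<Sum>l<n. (P ^\<^sub>m m) $$ (i,l) * P $$ (l,j))"
    using index_mult_mat_sum[OF pow_carrier_mat[OF P] P Suc.prems] by simp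
  also have "\<dots> \<ge> 0" using Suc nonneg by (intro sum_nonneg mult_nonneg_nonneg) auto
  finally show ?case .
qed (use P in auto)

lemma nonneg_mat_pow_mult_vec_ge:
  fixes P :: "real mat"
  assumes P: "P \<in> carrier_mat n n" and nonneg: "\<And>i j. i < n \<Longrightarrow> j < n \<Longrightarrow> P $$ (i,j) \<ge> 0"
    and g: "g \<in> carrier_vec n" and s: "s \<ge> 0"
    and super: "\<And>i. i < n \<Longrightarrow> (P *\<^sub>v g) $ i \<ge> s * g $ i"
  shows "i < n \<Longrightarrow> (P ^\<^sub>m m *\<^sub>v g) $ i \<ge> s ^ m * g $ i"
proof (induct m arbitrary: i)
  case (Suc m)
  have Pm: "P ^\<^sub>m m \<in> carrier_mat n n" using P by auto
  have "s ^ Suc m * g $ i \<le> s * (P ^\<^sub>m m *\<^sub>v g) $ i"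
    using mult_left_mono[OF Suc.hyps[OF Suc.prems] s] by (simp add: mult.assoc)
  also have "\<dots> = (\<Sum>j<n. (P ^\<^sub>m m) $$ (i,j) * (s * g $ j))"
    using index_mult_mat_vec_sum[OF Pm g Suc.prems]
    by (simp add: sum_distrib_left algebra_simps)
  also have "\<dots> \<le> (\<Sum>j<n. (P ^\<^sub>m m) $$ (i,j) * (P *\<^sub>v g) $ j)"
    using Suc.prems by (intro sum_mono mult_left_mono super nonneg_mat_pow_nonneg[OF P nonneg]) auto
  also have "\<dots> = (P ^\<^sub>m m *\<^sub>v (P *\<^sub>v g)) $ i"
    using index_mult_mat_vec_sum[OF Pm _ Suc.prems, of "P *\<^sub>v g"] P g by simp
  also have "P ^\<^sub>m m *\<^sub>v (P *\<^sub>v g) = P ^\<^sub>m Suc m *\<^sub>v g"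
    using assoc_mult_mat_vec[OF Pm P g] by simp
  finally show ?case .
qed (use P g in simp)

text \<open>If all eigenvalues were smaller than \<open>s\<close>, the entries of \<open>P ^ m\<close> would be
  \<open>O(t ^ m)\<close> for some \<open>t < s\<close>, contradicting \<open>P ^ m g \<ge> s ^ m g\<close>.\<close>

lemma collatz_wielandt:
  fixes P :: "real mat"
  assumes P: "P \<in> carrier_mat n n" and nonneg: "\<And>i j. i < n \<Longrightarrow> j < n \<Longrightarrow> P $$ (i,j) \<ge> 0"
    and g: "g \<in> carrier_vec n" "\<And>i. i < n \<Longrightarrow> g $ i \<ge> 0" "i0 < n" "g $ i0 > 0"
    and s: "s > 0" and super: "\<And>i. i < n \<Longrightarrow> (P *\<^sub>v g) $ i \<ge> s * g $ i"
  shows "\<exists>\<mu>. eigenvalue (map_mat complex_of_real P) \<mu> \<and> cmod \<mu> \<ge> s"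
proof (rule ccontr)
  assume "\<not> ?thesis"
  hence "\<And>\<mu>. eigenvalue (map_mat complex_of_real P) \<mu> \<Longrightarrow> cmod \<mu> < s"
    by (auto simp: not_le)
  moreover have "map_mat complex_of_real P \<in> carrier_mat n n" using P by auto
  ultimately obtain t where t: "0 < t" "t < s"
    and ev: "\<And>\<mu>. eigenvalue (map_mat complex_of_real P) \<mu> \<Longrightarrow> cmod \<mu> < t"
    using eigenvalues_below_smaller_bound s by metis
  from real_mat_pow_entry_bound[OF P t(1) ev] obtain C
    where C: "\<And>m i j. i < n \<Longrightarrow> j < n \<Longrightarrow> \<bar>(P ^\<^sub>m m) $$ (i,j)\<bar> \<le> C * t ^ m" by auto
  define G where "G = (\<Sum>j<n. g $ j)"
  have upper: "s ^ m * g $ i0 \<le> C * t ^ m * G" for m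
  proof -
    have Pm: "P ^\<^sub>m m \<in> carrier_mat n n" using P by auto
    have "s ^ m * g $ i0 \<le> (P ^\<^sub>m m *\<^sub>v g) $ i0"
      by (rule nonneg_mat_pow_mult_vec_ge[OF P nonneg g(1) _ super g(3)]) (use s in auto)
    also have "\<dots> = (\<Sum>j<n. (P ^\<^sub>m m) $$ (i0,j) * g $ j)"
      by (rule index_mult_mat_vec_sum[OF Pm g(1) g(3)])
    also have "\<dots> \<le> (\<Sum>j<n. C * t ^ m * g $ j)"
    proof (rule sum_mono)
      fix j assume "j \<in> {..<n}"
      with g(2) C[OF g(3), of j m] show "(P ^\<^sub>m m) $$ (i0,j) * g $ j \<le> C * t ^ m * g $ j"
        by (intro mult_right_mono) auto
    qed
    finally show ?thesis by (simp add: G_def sum_distrib_left)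
  qed
  obtain m where m: "C * G / g $ i0 < (s / t) ^ m"
    using real_arch_pow[of "s / t" "C * G / g $ i0"] t by auto
  have "(s / t) ^ m * g $ i0 = s ^ m * g $ i0 / t ^ m" by (simp add: power_divide)
  also have "\<dots> \<le> C * t ^ m * G / t ^ m" using t by (intro divide_right_mono upper) simp
  also have "\<dots> = C * G" using t by simp
  finally have "(s / t) ^ m \<le> C * G / g $ i0" using g(4) by (simp add: pos_le_divide_eq)
  with m show False by simp
qed

section \<open>Perron theory of positive matrices\<close>

lemma positive_mat_mult_vec_pos:
  fixes P :: "real mat"
  assumes P: "P \<in> carrier_mat n n" and pos: "\<And>i j. i < n \<Longrightarrow> j < n \<Longrightarrow> P $$ (i,j) > 0"
    and h: "h \<in> carrier_vec n" "\<And>i. i < n \<Longrightarrow> h $ i \<ge> 0" "i0 < n" "h $ i0 \<noteq> 0"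
    and i: "i < n"
  shows "(P *\<^sub>v h) $ i > 0"
proof -
  have "(P *\<^sub>v h) $ i = (\<Sum>j<n. P $$ (i,j) * h $ j)" by (rule index_mult_mat_vec_sum[OF P h(1) i])
  also have "\<dots> > 0"
  proof (rule sum_pos2[of _ i0])
    show "0 < P $$ (i,i0) * h $ i0" using pos[OF i h(3)] h(2)[OF h(3)] h(4) by auto
  qed (use h pos i in \<open>auto intro!: mult_nonneg_nonneg simp: less_imp_le\<close>)
  finally show ?thesis .
qed

text \<open>If \<open>P q \<ge> r q\<close> held with strict inequality somewhere, then \<open>g = P q\<close> would satisfy
  \<open>P g \<ge> (r + \<epsilon>) g\<close>, and Collatz--Wielandt would produce an eigenvalue beyond \<open>r\<close>.\<close>

lemma positive_mat_supereigenvector_eq: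
  fixes P :: "real mat"
  assumes P: "P \<in> carrier_mat n n" and pos: "\<And>i j. i < n \<Longrightarrow> j < n \<Longrightarrow> P $$ (i,j) > 0"
    and q: "q \<in> carrier_vec n" "\<And>i. i < n \<Longrightarrow> q $ i \<ge> 0" "i0 < n" "q $ i0 \<noteq> 0"
    and r: "r \<ge> 0" and super: "\<And>i. i < n \<Longrightarrow> (P *\<^sub>v q) $ i \<ge> r * q $ i"
    and ev: "\<And>\<mu>. eigenvalue (map_mat complex_of_real P) \<mu> \<Longrightarrow> cmod \<mu> \<le> r"
  shows "P *\<^sub>v q = r \<cdot>\<^sub>v q"
proof (rule ccontr)
  assume "P *\<^sub>v q \<noteq> r \<cdot>\<^sub>v q"
  then obtain i1 where i1: "i1 < n" "(P *\<^sub>v q) $ i1 \<noteq> r * q $ i1"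
    using P q(1) by (auto simp: vec_eq_iff)
  define g where "g = P *\<^sub>v q"
  define d where "d = vec n (\<lambda>j. g $ j - r * q $ j)"
  have g: "g \<in> carrier_vec n" using P q(1) by (simp add: g_def)
  have g_pos: "g $ i > 0" if "i < n" for i
    unfolding g_def by (rule positive_mat_mult_vec_pos[OF P pos q that])
  have gap: "(P *\<^sub>v g) $ i - r * g $ i > 0" if i: "i < n" for i
  proof -
    have "(P *\<^sub>v g) $ i - r * g $ i = (\<Sum>j<n. P $$ (i,j) * g $ j - r * (P $$ (i,j) * q $ j))"
      using index_mult_mat_vec_sum[OF P g i] index_mult_mat_vec_sum[OF P q(1) i]
      by (simp add: g_def sum_subtractf sum_distrib_left)
    also have "\<dots> = (P *\<^sub>v d) $ i"
      using index_mult_mat_vec_sum[OF P _ i, of d] by (simp add: d_def algebra_simps)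
    also have "\<dots> > 0"
      by (rule positive_mat_mult_vec_pos[OF P pos _ _ i1(1) _ i])
        (use super i1 in \<open>auto simp: d_def g_def\<close>)
    finally show ?thesis .
  qed
  define \<epsilon> where "\<epsilon> = Min ((\<lambda>i. ((P *\<^sub>v g) $ i - r * g $ i) / g $ i) ` {..<n})"
  have \<epsilon>: "\<epsilon> > 0"
    unfolding \<epsilon>_def using q(3) gap g_pos by (subst Min_gr_iff) auto
  have g_super: "(P *\<^sub>v g) $ i \<ge> (r + \<epsilon>) * g $ i" if i: "i < n" for i
  proof -
    have "\<epsilon> \<le> ((P *\<^sub>v g) $ i - r * g $ i) / g $ i" unfolding \<epsilon>_def using i by (intro Min_le) auto
    thus ?thesis using g_pos[OF i] by (simp add: pos_le_divide_eq algebra_simps)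
  qed
  have "\<exists>\<mu>. eigenvalue (map_mat complex_of_real P) \<mu> \<and> cmod \<mu> \<ge> r + \<epsilon>"
    by (rule collatz_wielandt[OF P _ g _ q(3) g_pos[OF q(3)] _ g_super])
      (use pos g_pos r \<epsilon> in \<open>auto simp: less_imp_le\<close>)
  with ev \<epsilon> show False by fastforce
qed

lemma positive_mat_nonneg_eigenvector_unique:
  fixes P :: "real mat"
  assumes P: "P \<in> carrier_mat n n" and pos: "\<And>i j. i < n \<Longrightarrow> j < n \<Longrightarrow> P $$ (i,j) > 0"
    and u: "u \<in> carrier_vec n" "\<And>i. i < n \<Longrightarrow> u $ i > 0" "P *\<^sub>v u = \<rho> \<cdot>\<^sub>v u"
    and q: "q \<in> carrier_vec n" "\<And>i. i < n \<Longrightarrow> q $ i \<ge> 0" "P *\<^sub>v q = \<rho> \<cdot>\<^sub>v q"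
  shows "\<exists>t. q = t \<cdot>\<^sub>v u"
proof (cases "n = 0")
  case True
  then show ?thesis using u q by (intro exI[of _ 0] eq_vecI) auto
next
  case False
  text \<open>Subtract the largest multiple of \<open>u\<close> below \<open>q\<close>: the difference is a nonnegative
    eigenvector with a zero entry, hence zero.\<close>
  define t where "t = Min ((\<lambda>i. q $ i / u $ i) ` {..<n})"
  have "t \<in> (\<lambda>i. q $ i / u $ i) ` {..<n}" unfolding t_def using False by (intro Min_in) auto
  then obtain i0 where i0: "i0 < n" "t = q $ i0 / u $ i0" by auto
  define w where "w = vec n (\<lambda>i. q $ i - t * u $ i)"
  have w: "w \<in> carrier_vec n" by (simp add: w_def)
  have w_nonneg: "w $ i \<ge> 0" if "i < n" for i
  proof -
    have "t \<le> q $ i / u $ i" unfolding t_def using that by (intro Min_le) auto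
    thus ?thesis using u(2)[OF that] that by (simp add: w_def pos_le_divide_eq mult.commute)
  qed
  have w_i0: "w $ i0 = 0" using i0 u(2)[OF i0(1)] by (simp add: w_def)
  have Pw: "(P *\<^sub>v w) $ i = \<rho> * w $ i" if i: "i < n" for i
  proof -
    have "(P *\<^sub>v w) $ i = (P *\<^sub>v q) $ i - t * (P *\<^sub>v u) $ i"
      unfolding index_mult_mat_vec_sum[OF P w i] index_mult_mat_vec_sum[OF P q(1) i]
        index_mult_mat_vec_sum[OF P u(1) i]
      by (simp add: w_def sum_subtractf sum_distrib_left algebra_simps)
    thus ?thesis using q u i by (simp add: w_def algebra_simps)
  qed
  have "w $ i = 0" if "i < n" for i
  proof (rule ccontr)
    assume "w $ i \<noteq> 0"
    from positive_mat_mult_vec_pos[OF P pos w w_nonneg that this i0(1)] Pw[OF i0(1)] w_i0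
    show False by simp
  qed
  hence "q = t \<cdot>\<^sub>v u" using q(1) u(1) by (intro eq_vecI) (auto simp: w_def)
  thus ?thesis by blast
qed

lemma Re_eq_cmod_imp_of_real: "Re w = cmod w \<Longrightarrow> w = complex_of_real (cmod w)"
  using cmod_power2[of w] by (simp add: complex_eq_iff)

lemma cmod_sum_eq_sum_cmod_aligned:
  fixes a :: "'b \<Rightarrow> complex"
  assumes fin: "finite I" and eq: "cmod (\<Sum>i\<in>I. a i) = (\<Sum>i\<in>I. cmod (a i))"
    and nz: "(\<Sum>i\<in>I. a i) \<noteq> 0" and i: "i \<in> I"
  shows "a i = complex_of_real (cmod (a i)) * sgn (\<Sum>i\<in>I. a i)"
proof -
  define S where "S = (\<Sum>i\<in>I. a i)"
  define \<omega> where "\<omega> = cnj S / complex_of_real (cmod S)"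
  have cS: "cmod S > 0" using nz by (simp add: S_def)
  have \<omega>: "cmod \<omega> = 1" using cS by (simp add: \<omega>_def norm_divide)
  have \<omega>S: "\<omega> * S = complex_of_real (cmod S)"
    using cS complex_norm_square[of S] by (simp add: \<omega>_def field_simps power2_eq_square)
  text \<open>Rotating by \<open>\<omega>\<close> makes the sum real, so the real parts reach the moduli termwise.\<close>
  have le: "Re (\<omega> * a j) \<le> cmod (a j)" for j
    using complex_Re_le_cmod[of "\<omega> * a j"] \<omega> by (simp add: norm_mult)
  have "(\<Sum>j\<in>I. Re (\<omega> * a j)) = Re (\<omega> * S)" by (simp add: S_def sum_distrib_left)
  also have "\<dots> = cmod S" by (simp add: \<omega>S)
  also have "\<dots> = (\<Sum>j\<in>I. cmod (a j))" using eq by (simp add: S_def)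
  finally have "(\<Sum>j\<in>I. cmod (a j) - Re (\<omega> * a j)) = 0" by (simp add: sum_subtractf)
  hence "Re (\<omega> * a i) = cmod (\<omega> * a i)"
    using sum_nonneg_eq_0_iff[OF fin, of "\<lambda>j. cmod (a j) - Re (\<omega> * a j)"] le i \<omega>
    by (simp add: norm_mult)
  hence "\<omega> * a i = complex_of_real (cmod (a i))"
    using \<omega> Re_eq_cmod_imp_of_real by (metis mult_cancel_right1 norm_mult)
  moreover have "sgn S * \<omega> = 1"
    using cS \<omega>S by (simp add: sgn_eq \<omega>_def field_simps)
  ultimately show ?thesis unfolding S_def[symmetric]
    by (metis mult.assoc mult.commute mult.right_neutral)
qed

lemma nonneg_mat_modulus_subeigenvector:
  fixes P :: "real mat" and z :: "complex vec"
  assumes P: "P \<in> carrier_mat n n" and nonneg: "\<And>i j. i < n \<Longrightarrow> j < n \<Longrightarrow> P $$ (i,j) \<ge> 0"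
    and z: "z \<in> carrier_vec n" "map_mat complex_of_real P *\<^sub>v z = \<mu> \<cdot>\<^sub>v z" and i: "i < n"
  shows "cmod \<mu> * cmod (z $ i) \<le> (P *\<^sub>v map_vec cmod z) $ i"
proof -
  have "\<mu> * z $ i = (\<Sum>j<n. complex_of_real (P $$ (i,j)) * z $ j)"
    using arg_cong[OF z(2), of "\<lambda>v. v $ i"] index_mult_mat_vec_sum[OF _ z(1) i, of "map_mat complex_of_real P"]
      P z(1) i by simp
  hence "cmod \<mu> * cmod (z $ i) = cmod (\<Sum>j<n. complex_of_real (P $$ (i,j)) * z $ j)"
    by (metis norm_mult)
  also have "\<dots> \<le> (\<Sum>j<n. cmod (complex_of_real (P $$ (i,j)) * z $ j))" by (rule norm_sum)
  also have "\<dots> = (P *\<^sub>v map_vec cmod z) $ i"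
    using index_mult_mat_vec_sum[OF P _ i, of "map_vec cmod z"] z(1) nonneg i
    by (simp add: norm_mult)
  finally show ?thesis .
qed

text \<open>Equality in the triangle inequality for one row of \<open>P z\<close> forces a common phase on the
  entries of \<open>z\<close>.\<close>

lemma positive_mat_modulus_eigenvector_phase:
  fixes P :: "real mat" and z :: "complex vec"
  assumes P: "P \<in> carrier_mat n n" and pos: "\<And>i j. i < n \<Longrightarrow> j < n \<Longrightarrow> P $$ (i,j) > 0"
    and z: "z \<in> carrier_vec n" "map_mat complex_of_real P *\<^sub>v z = \<mu> \<cdot>\<^sub>v z"
    and modulus: "P *\<^sub>v map_vec cmod z = cmod \<mu> \<cdot>\<^sub>v map_vec cmod z"
    and z_pos: "\<And>i. i < n \<Longrightarrow> cmod (z $ i) > 0" and \<mu>: "\<mu> \<noteq> 0" and n: "n > 0"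
  shows "\<mu> = complex_of_real (cmod \<mu>)"
    and "\<exists>\<sigma>. z = \<sigma> \<cdot>\<^sub>v map_vec complex_of_real (map_vec cmod z)"
proof -
  define q where "q = map_vec cmod z"
  have q: "q \<in> carrier_vec n" "\<And>i. i < n \<Longrightarrow> q $ i > 0" using z(1) z_pos by (auto simp: q_def)
  define a where "a j = complex_of_real (P $$ (0,j)) * z $ j" for j
  have S_sum: "(map_mat complex_of_real P *\<^sub>v z) $ 0 = (\<Sum>j<n. a j)"
    using index_mult_mat_vec_sum[OF _ z(1) n, of "map_mat complex_of_real P"] P n
    by (simp add: a_def)
  define S where "S = (\<Sum>j<n. a j)"
  have cmod_S: "cmod S = cmod \<mu> * q $ 0"
    using z(2) n z(1) S_sum by (simp add: S_def q_def norm_mult flip: S_sum)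
  hence "S \<noteq> 0" using q(2)[OF n] \<mu> by auto
  have triangle_eq: "cmod S = (\<Sum>j<n. cmod (a j))"
    using cmod_S modulus index_mult_mat_vec_sum[OF P q(1) n] n z(1) pos[OF n] q(1)
    by (auto simp: q_def a_def norm_mult less_imp_le intro!: sum.cong)
  have z_eq: "z $ j = complex_of_real (q $ j) * sgn S" if j: "j < n" for j
  proof -
    have "a j = complex_of_real (cmod (a j)) * sgn S"
      using cmod_sum_eq_sum_cmod_aligned[of "{..<n}" a j] triangle_eq \<open>S \<noteq> 0\<close> j
      by (simp add: S_def)
    also have "cmod (a j) = P $$ (0,j) * q $ j"
      using pos[OF n j] z(1) j by (simp add: a_def q_def norm_mult)
    finally have "complex_of_real (P $$ (0,j)) * z $ j
        = complex_of_real (P $$ (0,j)) * (complex_of_real (q $ j) * sgn S)"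
      by (simp add: a_def mult.assoc)
    thus ?thesis using pos[OF n j] by simp
  qed
  have "\<mu> * z $ 0 = S" using arg_cong[OF z(2), of "\<lambda>v. v $ 0"] z(1) n S_sum by (simp add: S_def)
  also have "\<dots> = complex_of_real (cmod \<mu>) * z $ 0"
    using cmod_S \<open>S \<noteq> 0\<close> z_eq[OF n] \<mu> q(2)[OF n] by (simp add: sgn_eq mult.commute)
  finally show "\<mu> = complex_of_real (cmod \<mu>)" using q(2)[OF n] \<open>S \<noteq> 0\<close> z_eq[OF n]
    by (simp add: sgn_zero_iff)
  show "\<exists>\<sigma>. z = \<sigma> \<cdot>\<^sub>v map_vec complex_of_real (map_vec cmod z)"
    using z(1) z_eq by (intro exI[of _ "sgn S"] eq_vecI) (auto simp: q_def mult.commute)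
qed

lemma positive_mat_peripheral_eigenvector:
  fixes P :: "real mat" and z :: "complex vec"
  assumes P: "P \<in> carrier_mat n n" and pos: "\<And>i j. i < n \<Longrightarrow> j < n \<Longrightarrow> P $$ (i,j) > 0"
    and ev: "\<And>\<nu>. eigenvalue (map_mat complex_of_real P) \<nu> \<Longrightarrow> cmod \<nu> \<le> \<rho>"
    and z: "z \<in> carrier_vec n" "z \<noteq> 0\<^sub>v n" "map_mat complex_of_real P *\<^sub>v z = \<mu> \<cdot>\<^sub>v z"
    and \<mu>: "cmod \<mu> = \<rho>"
  shows "\<rho> > 0" "\<mu> = complex_of_real \<rho>" "P *\<^sub>v map_vec cmod z = \<rho> \<cdot>\<^sub>v map_vec cmod z"
    "\<And>i. i < n \<Longrightarrow> cmod (z $ i) > 0"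
    "\<exists>\<sigma>. z = \<sigma> \<cdot>\<^sub>v map_vec complex_of_real (map_vec cmod z)"
proof -
  define q where "q = map_vec cmod z"
  have q: "q \<in> carrier_vec n" "\<And>i. i < n \<Longrightarrow> q $ i \<ge> 0" using z(1) by (auto simp: q_def)
  obtain i0 where i0: "i0 < n" "z $ i0 \<noteq> 0"
    using z(1,2) by (metis carrier_vecD eq_vecI index_zero_vec)
  have q_i0: "q $ i0 \<noteq> 0" using i0 z(1) by (simp add: q_def)
  have nonneg: "P $$ (i,j) \<ge> 0" if "i < n" "j < n" for i j using pos[OF that] by simp
  have "(P *\<^sub>v q) $ i \<ge> \<rho> * q $ i" if "i < n" for i
    using nonneg_mat_modulus_subeigenvector[OF P nonneg z(1,3) that] \<mu> z(1) that by (simp add: q_def)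
  from positive_mat_supereigenvector_eq[OF P pos q i0(1) q_i0 _ this ev] \<mu>
  have Pq: "P *\<^sub>v q = \<rho> \<cdot>\<^sub>v q" by auto
  have q_pos: "q $ i > 0" and "\<rho> > 0" if i: "i < n" for i
  proof -
    have "\<rho> * q $ i > 0"
      using positive_mat_mult_vec_pos[OF P pos q i0(1) q_i0 i] Pq i q(1) by simp
    thus "q $ i > 0" "\<rho> > 0" using q(2)[OF i] \<mu> by (auto simp: zero_less_mult_iff)
  qed
  then show "\<rho> > 0" using i0(1) by blast
  show "P *\<^sub>v map_vec cmod z = \<rho> \<cdot>\<^sub>v map_vec cmod z" using Pq by (simp add: q_def)
  show z_pos: "\<And>i. i < n \<Longrightarrow> cmod (z $ i) > 0" using q_pos z(1) by (simp add: q_def)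
  note phase = positive_mat_modulus_eigenvector_phase[OF P pos z(1,3) _ z_pos]
  show "\<mu> = complex_of_real \<rho>" "\<exists>\<sigma>. z = \<sigma> \<cdot>\<^sub>v map_vec complex_of_real (map_vec cmod z)"
    using phase Pq \<mu> \<open>\<rho> > 0\<close> i0(1) by (auto simp: q_def)
qed

definition perron_eigenvector :: "nat \<Rightarrow> real mat \<Rightarrow> real \<Rightarrow> real vec \<Rightarrow> bool" where
  "perron_eigenvector n B \<rho> x \<longleftrightarrow> x \<in> carrier_vec n \<and> B *\<^sub>v x = \<rho> \<cdot>\<^sub>v x \<and>
     (\<forall>\<mu> z. z \<in> carrier_vec n \<longrightarrow> z \<noteq> 0\<^sub>v n \<longrightarrow> map_mat complex_of_real B *\<^sub>v z = \<mu> \<cdot>\<^sub>v z \<longrightarrow>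
        cmod \<mu> \<le> \<rho> \<and> (cmod \<mu> = \<rho> \<longrightarrow> \<mu> = complex_of_real \<rho> \<and>
          (\<exists>a. z = a \<cdot>\<^sub>v map_vec complex_of_real x)))"

lemma positive_mat_perron:
  fixes P :: "real mat"
  assumes P: "P \<in> carrier_mat n n" and n: "n > 0"
    and pos: "\<And>i j. i < n \<Longrightarrow> j < n \<Longrightarrow> P $$ (i,j) > 0"
  shows "\<exists>\<rho> u. \<rho> > 0 \<and> (\<forall>i<n. u $ i > 0) \<and> perron_eigenvector n P \<rho> u"
proof -
  define Pc where "Pc = map_mat complex_of_real P"
  have Pc: "Pc \<in> carrier_mat n n" using P by (simp add: Pc_def)
  define \<rho> where "\<rho> = spectral_radius Pc"
  have ev: "cmod \<mu> \<le> \<rho>" if "eigenvalue (map_mat complex_of_real P) \<mu>" for \<mu>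
    unfolding \<rho>_def using that
    by (intro spectral_radius_mem_max(2)[OF Pc n]) (auto simp: spectrum_def Pc_def)
  have peripheral: "\<rho> > 0" "\<mu> = complex_of_real \<rho>"
    "P *\<^sub>v map_vec cmod z = \<rho> \<cdot>\<^sub>v map_vec cmod z" "\<And>i. i < n \<Longrightarrow> cmod (z $ i) > 0"
    "\<exists>\<sigma>. z = \<sigma> \<cdot>\<^sub>v map_vec complex_of_real (map_vec cmod z)"
    if "z \<in> carrier_vec n" "z \<noteq> 0\<^sub>v n" "map_mat complex_of_real P *\<^sub>v z = \<mu> \<cdot>\<^sub>v z"
      "cmod \<mu> = \<rho>" for z \<mu>
    using positive_mat_peripheral_eigenvector[where P = P and \<rho> = \<rho> and z = z and \<mu> = \<mu>]
      P pos ev that by blast+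
  obtain \<mu>0 where "\<rho> = cmod \<mu>0" "eigenvalue Pc \<mu>0"
    using spectral_radius_mem_max(1)[OF Pc n] by (auto simp: \<rho>_def spectrum_def)
  then obtain z0 where z0: "z0 \<in> carrier_vec n" "z0 \<noteq> 0\<^sub>v n" "Pc *\<^sub>v z0 = \<mu>0 \<cdot>\<^sub>v z0"
    "cmod \<mu>0 = \<rho>" using Pc by (auto simp: eigenvalue_def eigenvector_def)
  define u where "u = map_vec cmod z0"
  have u: "u \<in> carrier_vec n" using z0(1) by (simp add: u_def)
  note z0_peripheral = peripheral[OF z0[unfolded Pc_def], folded u_def]
  have u_pos: "u $ i > 0" if "i < n" for i
    using z0_peripheral(4)[OF that] z0(1) that by (simp add: u_def)
  have "perron_eigenvector n P \<rho> u"
    unfolding perron_eigenvector_def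
  proof (intro conjI allI impI)
    show "u \<in> carrier_vec n" "P *\<^sub>v u = \<rho> \<cdot>\<^sub>v u" using u z0_peripheral(3) by auto
    fix \<mu> z assume z: "z \<in> carrier_vec n" "z \<noteq> 0\<^sub>v n" "map_mat complex_of_real P *\<^sub>v z = \<mu> \<cdot>\<^sub>v z"
    hence "eigenvalue (map_mat complex_of_real P) \<mu>"
      using P by (auto simp: eigenvalue_def eigenvector_def)
    then show "cmod \<mu> \<le> \<rho>" by (rule ev)
    assume \<mu>: "cmod \<mu> = \<rho>"
    note z_peripheral = peripheral[OF z \<mu>]
    show "\<mu> = complex_of_real \<rho>" by (rule z_peripheral(2))
    obtain t where t: "map_vec cmod z = t \<cdot>\<^sub>v u"
      using positive_mat_nonneg_eigenvector_unique[OF P pos u u_pos z0_peripheral(3)[folded u_def]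
          _ _ z_peripheral(3)] z(1) by auto
    obtain \<sigma> where "z = \<sigma> \<cdot>\<^sub>v map_vec complex_of_real (map_vec cmod z)"
      using z_peripheral(5) by blast
    with t u show "\<exists>a. z = a \<cdot>\<^sub>v map_vec complex_of_real u"
      by (intro exI[of _ "\<sigma> * complex_of_real t"]) (auto simp: vec_eq_iff)
  qed
  with z0_peripheral(1) u_pos show ?thesis by blast
qed

lemma perron_eigenvectorD:
  assumes "perron_eigenvector n B \<rho> x"
  shows "x \<in> carrier_vec n" "B *\<^sub>v x = \<rho> \<cdot>\<^sub>v x"
    and "z \<in> carrier_vec n \<Longrightarrow> z \<noteq> 0\<^sub>v n \<Longrightarrow> map_mat complex_of_real B *\<^sub>v z = \<mu> \<cdot>\<^sub>v z
      \<Longrightarrow> cmod \<mu> \<le> \<rho>"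
    and "z \<in> carrier_vec n \<Longrightarrow> z \<noteq> 0\<^sub>v n \<Longrightarrow> map_mat complex_of_real B *\<^sub>v z = \<mu> \<cdot>\<^sub>v z
      \<Longrightarrow> cmod \<mu> = \<rho> \<Longrightarrow> \<mu> = complex_of_real \<rho>"
    and "z \<in> carrier_vec n \<Longrightarrow> z \<noteq> 0\<^sub>v n \<Longrightarrow> map_mat complex_of_real B *\<^sub>v z = \<mu> \<cdot>\<^sub>v z
      \<Longrightarrow> cmod \<mu> = \<rho> \<Longrightarrow> \<exists>a. z = a \<cdot>\<^sub>v map_vec complex_of_real x"
  using assms unfolding perron_eigenvector_def by simp_all

lemma perron_eigenvector_real_eigenspace:
  assumes x: "perron_eigenvector n B \<rho> x" and B: "B \<in> carrier_mat n n" and \<rho>: "\<rho> \<ge> 0"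
    and q: "q \<in> carrier_vec n" "B *\<^sub>v q = \<rho> \<cdot>\<^sub>v q"
  shows "\<exists>t. q = t \<cdot>\<^sub>v x"
proof (cases "q = 0\<^sub>v n")
  case True
  then show ?thesis using perron_eigenvectorD(1)[OF x] by (intro exI[of _ 0]) auto
next
  case False
  define qc where "qc = map_vec complex_of_real q"
  have qc: "qc \<in> carrier_vec n" "qc \<noteq> 0\<^sub>v n"
    "map_mat complex_of_real B *\<^sub>v qc = complex_of_real \<rho> \<cdot>\<^sub>v qc"
    using q(1) False of_real_mult_mat_vec_eigen[OF B q] by (simp_all add: qc_def of_real_vec_eq_zero_iff)
  obtain a where a: "qc = a \<cdot>\<^sub>v map_vec complex_of_real x"
    using perron_eigenvectorD(5)[OF x qc] \<rho> by auto
  have "q = Re a \<cdot>\<^sub>v x"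
  proof (rule eq_vecI)
    fix i assume "i < dim_vec (Re a \<cdot>\<^sub>v x)"
    hence i: "i < n" using perron_eigenvectorD(1)[OF x] by simp
    have "complex_of_real (q $ i) = a * complex_of_real (x $ i)"
      using arg_cong[OF a, of "\<lambda>v. v $ i"] q(1) perron_eigenvectorD(1)[OF x] i by (simp add: qc_def)
    from arg_cong[OF this, of Re] show "q $ i = (Re a \<cdot>\<^sub>v x) $ i"
      using perron_eigenvectorD(1)[OF x] i by simp
  qed (use q(1) perron_eigenvectorD(1)[OF x] in simp)
  then show ?thesis by blast
qed

lemma perron_eigenvector_of_commuting:
  fixes A B :: "real mat"
  assumes A: "A \<in> carrier_mat n n" and B: "B \<in> carrier_mat n n" and comm: "A * B = B * A"
    and x: "perron_eigenvector n B \<rho> x" and \<rho>: "\<rho> \<ge> 0"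
  shows "\<exists>c. A *\<^sub>v x = c \<cdot>\<^sub>v x"
proof -
  note x' = perron_eigenvectorD(1,2)[OF x]
  have "B *\<^sub>v (A *\<^sub>v x) = A *\<^sub>v (B *\<^sub>v x)"
    using assoc_mult_mat_vec[OF B A x'(1)] assoc_mult_mat_vec[OF A B x'(1)] comm by simp
  also have "\<dots> = \<rho> \<cdot>\<^sub>v (A *\<^sub>v x)" using A x' by (simp add: mult_mat_vec)
  finally show ?thesis
    using perron_eigenvector_real_eigenspace[OF x B \<rho>] A x'(1) by simp
qed

lemma perron_eigenvector_real_eigenvalue:
  fixes B :: "real mat"
  assumes x: "perron_eigenvector n B \<rho> x" and B: "B \<in> carrier_mat n n"
    and v: "v \<in> carrier_vec n" "v \<noteq> 0\<^sub>v n" "B *\<^sub>v v = e \<cdot>\<^sub>v v"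
  shows "\<bar>e\<bar> \<le> \<rho>" and "\<bar>e\<bar> = \<rho> \<Longrightarrow> e = \<rho>"
proof -
  have vc: "map_vec complex_of_real v \<in> carrier_vec n" "map_vec complex_of_real v \<noteq> 0\<^sub>v n"
    using v by (simp_all add: of_real_vec_eq_zero_iff)
  note ev = of_real_mult_mat_vec_eigen[OF B v(1,3)]
  show "\<bar>e\<bar> \<le> \<rho>" using perron_eigenvectorD(3)[OF x vc ev] by simp
  show "e = \<rho>" if "\<bar>e\<bar> = \<rho>" using perron_eigenvectorD(4)[OF x vc ev] that by simp
qed

lemma perron_eigenvector_pow_eigenvalue:
  fixes A :: "real mat"
  assumes A: "A \<in> carrier_mat n n" and x: "perron_eigenvector n (A ^\<^sub>m k) \<rho> x"
    and x0: "x \<noteq> 0\<^sub>v n" and Ax: "A *\<^sub>v x = c \<cdot>\<^sub>v x"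
  shows "c ^ k = \<rho>"
proof -
  have "eigenvector A x c" using A x x0 Ax by (simp add: eigenvector_def perron_eigenvectorD(1))
  from eigenvector_pow[OF A this, of k] perron_eigenvectorD(2)[OF x]
  have "c ^ k \<cdot>\<^sub>v x = \<rho> \<cdot>\<^sub>v x" by simp
  then show ?thesis by (rule smult_vec_right_cancel[OF perron_eigenvectorD(1)[OF x] x0])
qed

section \<open>Strictly sign-symmetric matrices\<close>

lemma strictly_J_sign_symmetric_nonzero:
  assumes "strictly_J_sign_symmetric n J B" "i < n" "j < n"
  shows "B $$ (i,j) \<noteq> 0"
  using assms unfolding strictly_J_sign_symmetric_def by (metis less_irrefl)

lemma strictly_J_sign_symmetric_perturb:
  assumes P: "strictly_J_sign_symmetric n J P" and c: "c > 0"
    and close: "\<And>i j. i < n \<Longrightarrow> j < n \<Longrightarrow> \<bar>B $$ (i,j) - c * P $$ (i,j)\<bar> < c * \<bar>P $$ (i,j)\<bar>"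
  shows "strictly_J_sign_symmetric n J B"
  unfolding strictly_J_sign_symmetric_def
proof (intro conjI allI impI)
  show "J \<subseteq> {0..<n}" using P by (simp add: strictly_J_sign_symmetric_def)
  fix i j assume ij: "i < n" "j < n"
  show "B $$ (i,j) > 0" if "(i \<in> J) = (j \<in> J)"
  proof -
    have "P $$ (i,j) > 0" using P ij that by (simp add: strictly_J_sign_symmetric_def)
    with close[OF ij] show ?thesis by (simp add: abs_less_iff)
  qed
  show "B $$ (i,j) < 0" if "(i \<in> J) \<noteq> (j \<in> J)"
  proof -
    have "P $$ (i,j) < 0" using P ij that by (simp add: strictly_J_sign_symmetric_def)
    with close[OF ij] show ?thesis by (simp add: abs_less_iff)
  qed
qed

lemma eventually_SJS_iff_eventually:
  "eventually_SJS n A \<longleftrightarrow> (\<forall>\<^sub>F k in sequentially. SJS n (A ^\<^sub>m k))"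
  unfolding eventually_SJS_def eventually_sequentially
  by (metis le_trans max.cobounded1 max.cobounded2 zero_less_one max.strict_coboundedI1 less_one
      not_less_eq_eq)

lemma strictly_J_sign_symmetric_transpose:
  assumes "strictly_J_sign_symmetric n J B" "B \<in> carrier_mat n n"
  shows "strictly_J_sign_symmetric n J (transpose_mat B)"
  using assms unfolding strictly_J_sign_symmetric_def by auto

text \<open>Conjugation \<open>D B D\<close> by the signature matrix \<open>D = diag (sgnJ J)\<close> turns a strictly
  \<open>J\<close>-sign-symmetric matrix into a positive one; \<open>sign_scale_vec\<close> is multiplication by \<open>D\<close>.\<close>

definition sgnJ :: "nat set \<Rightarrow> nat \<Rightarrow> real" where
  "sgnJ J i = (if i \<in> J then 1 else -1)"

lemma sgnJ_mult_self [simp]: "sgnJ J i * sgnJ J i = 1"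
  by (simp add: sgnJ_def)

lemma sgnJ_pattern_mult_pos:
  assumes "sgnJ J i * a > 0" "sgnJ J i * b > 0"
  shows "a * b > 0"
proof -
  have "a * b = (sgnJ J i * a) * (sgnJ J i * b)" by (simp add: sgnJ_def)
  also have "\<dots> > 0" using assms by simp
  finally show ?thesis .
qed

definition sign_conj_mat :: "nat \<Rightarrow> nat set \<Rightarrow> real mat \<Rightarrow> real mat" where
  "sign_conj_mat n J B = mat n n (\<lambda>(i,j). sgnJ J i * sgnJ J j * B $$ (i,j))"

definition sign_scale_vec :: "nat \<Rightarrow> nat set \<Rightarrow> 'a::real_algebra_1 vec \<Rightarrow> 'a vec" where
  "sign_scale_vec n J z = vec n (\<lambda>i. of_real (sgnJ J i) * z $ i)"

lemma sign_scale_vec_carrier [simp]: "sign_scale_vec n J z \<in> carrier_vec n"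
  by (simp add: sign_scale_vec_def)

lemma sign_scale_vec_involutive:
  fixes z :: "'a::real_algebra_1 vec"
  assumes "z \<in> carrier_vec n"
  shows "sign_scale_vec n J (sign_scale_vec n J z) = z"
proof (rule eq_vecI)
  fix i assume "i < dim_vec z"
  moreover have "of_real (sgnJ J i) * (of_real (sgnJ J i) * z $ i) = (z $ i :: 'a)"
    by (simp add: mult.assoc[symmetric] flip: of_real_mult)
  ultimately show "sign_scale_vec n J (sign_scale_vec n J z) $ i = z $ i"
    using assms by (simp add: sign_scale_vec_def)
qed (use assms in \<open>simp add: sign_scale_vec_def\<close>)

lemma sign_scale_vec_smult:
  fixes z :: "'a::{real_algebra_1,comm_ring_1} vec"
  shows "z \<in> carrier_vec n \<Longrightarrow> sign_scale_vec n J (a \<cdot>\<^sub>v z) = a \<cdot>\<^sub>v sign_scale_vec n J z"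
  by (intro eq_vecI) (auto simp: sign_scale_vec_def mult.left_commute)

lemma sign_scale_vec_eq_zero_iff:
  fixes z :: "'a::real_algebra_1 vec"
  assumes "z \<in> carrier_vec n"
  shows "sign_scale_vec n J z = 0\<^sub>v n \<longleftrightarrow> z = 0\<^sub>v n"
proof
  assume "sign_scale_vec n J z = 0\<^sub>v n"
  hence "sign_scale_vec n J (sign_scale_vec n J z) = 0\<^sub>v n"
    by (intro eq_vecI) (auto simp: sign_scale_vec_def)
  thus "z = 0\<^sub>v n" using sign_scale_vec_involutive[OF assms] by simp
qed (intro eq_vecI, auto simp: sign_scale_vec_def)

lemma sign_scale_vec_of_real:
  "u \<in> carrier_vec n \<Longrightarrow>
    sign_scale_vec n J (map_vec complex_of_real u) = map_vec complex_of_real (sign_scale_vec n J u)"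
  by (intro eq_vecI) (auto simp: sign_scale_vec_def)

lemma sign_conj_mat_mult_vec:
  fixes B :: "real mat" and z :: "'a::{real_algebra_1,comm_ring_1} vec"
  assumes B: "B \<in> carrier_mat n n" and z: "z \<in> carrier_vec n"
  shows "map_mat of_real (sign_conj_mat n J B) *\<^sub>v sign_scale_vec n J z
    = sign_scale_vec n J (map_mat of_real B *\<^sub>v z)"
proof (rule eq_vecI)
  fix i assume "i < dim_vec (sign_scale_vec n J (map_mat of_real B *\<^sub>v z))"
  hence i: "i < n" by (simp add: sign_scale_vec_def)
  have Bs: "map_mat of_real (sign_conj_mat n J B) \<in> carrier_mat n n"
    by (simp add: sign_conj_mat_def)
  have Bc: "map_mat of_real B \<in> carrier_mat n n" using B by simp
  have "(map_mat of_real (sign_conj_mat n J B) *\<^sub>v sign_scale_vec n J z) $ i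
     = (\<Sum>j<n. of_real (sgnJ J i * sgnJ J j * B $$ (i,j)) * (of_real (sgnJ J j) * z $ j))"
    unfolding index_mult_mat_vec_sum[OF Bs sign_scale_vec_carrier i]
    by (intro sum.cong) (auto simp: sign_conj_mat_def sign_scale_vec_def i)
  also have "\<dots> = (\<Sum>j<n. of_real (sgnJ J i) * (of_real (B $$ (i,j)) * z $ j))"
    by (intro sum.cong refl) (auto simp: sgnJ_def)
  also have "\<dots> = sign_scale_vec n J (map_mat of_real B *\<^sub>v z) $ i"
    using i index_mult_mat_vec_sum[OF Bc z i] B
    by (simp add: sign_scale_vec_def sum_distrib_left)
  finally show "(map_mat of_real (sign_conj_mat n J B) *\<^sub>v sign_scale_vec n J z) $ i
    = sign_scale_vec n J (map_mat of_real B *\<^sub>v z) $ i" .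
qed (simp add: sign_scale_vec_def sign_conj_mat_def)

lemma sign_conj_mat_mult_vec_real:
  fixes B :: "real mat" and z :: "real vec"
  assumes "B \<in> carrier_mat n n" "z \<in> carrier_vec n"
  shows "sign_conj_mat n J B *\<^sub>v sign_scale_vec n J z = sign_scale_vec n J (B *\<^sub>v z)"
proof -
  have "map_mat of_real X = X" for X :: "real mat" by (intro eq_matI) auto
  with sign_conj_mat_mult_vec[OF assms, of J] show ?thesis by simp
qed

lemma perron_eigenvector_sign_conj:
  assumes P: "perron_eigenvector n (sign_conj_mat n J B) \<rho> u" and B: "B \<in> carrier_mat n n"
  shows "perron_eigenvector n B \<rho> (sign_scale_vec n J u)"
  unfolding perron_eigenvector_def
proof (intro conjI allI impI)
  note u = perron_eigenvectorD(1,2)[OF P]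
  show "sign_scale_vec n J u \<in> carrier_vec n" by simp
  have "sign_scale_vec n J (B *\<^sub>v sign_scale_vec n J u) = \<rho> \<cdot>\<^sub>v u"
    using sign_conj_mat_mult_vec_real[OF B, of "sign_scale_vec n J u" J] u
    by (simp add: sign_scale_vec_involutive)
  from arg_cong[OF this, of "sign_scale_vec n J"] B u(1)
  show "B *\<^sub>v sign_scale_vec n J u = \<rho> \<cdot>\<^sub>v sign_scale_vec n J u"
    by (simp add: sign_scale_vec_involutive sign_scale_vec_smult)
  fix \<mu> z
  assume z: "z \<in> carrier_vec n" "z \<noteq> 0\<^sub>v n" "map_mat complex_of_real B *\<^sub>v z = \<mu> \<cdot>\<^sub>v z"
  have Sz: "sign_scale_vec n J z \<in> carrier_vec n" "sign_scale_vec n J z \<noteq> 0\<^sub>v n"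
    "map_mat complex_of_real (sign_conj_mat n J B) *\<^sub>v sign_scale_vec n J z = \<mu> \<cdot>\<^sub>v sign_scale_vec n J z"
    using z sign_scale_vec_eq_zero_iff[OF z(1)] sign_conj_mat_mult_vec[OF B z(1)]
    by (simp_all add: sign_scale_vec_smult)
  show "cmod \<mu> \<le> \<rho>" by (rule perron_eigenvectorD(3)[OF P Sz])
  assume \<mu>: "cmod \<mu> = \<rho>"
  show "\<mu> = complex_of_real \<rho>" by (rule perron_eigenvectorD(4)[OF P Sz \<mu>])
  obtain a where "sign_scale_vec n J z = a \<cdot>\<^sub>v map_vec complex_of_real u"
    using perron_eigenvectorD(5)[OF P Sz \<mu>] by blast
  from arg_cong[OF this, of "sign_scale_vec n J"]
  have "z = a \<cdot>\<^sub>v map_vec complex_of_real (sign_scale_vec n J u)"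
    using z(1) u(1) by (simp add: sign_scale_vec_involutive sign_scale_vec_smult sign_scale_vec_of_real)
  then show "\<exists>a. z = a \<cdot>\<^sub>v map_vec complex_of_real (sign_scale_vec n J u)" by blast
qed

lemma SJS_perron:
  assumes B: "B \<in> carrier_mat n n" and n: "n > 0" and J: "strictly_J_sign_symmetric n J B"
  shows "\<exists>\<rho> x. \<rho> > 0 \<and> (\<forall>i<n. sgnJ J i * x $ i > 0) \<and> perron_eigenvector n B \<rho> x"
proof -
  have "sign_conj_mat n J B $$ (i,j) > 0" if "i < n" "j < n" for i j
    using J that by (auto simp: sign_conj_mat_def sgnJ_def strictly_J_sign_symmetric_def)
  from positive_mat_perron[OF _ n this] obtain \<rho> u
    where "\<rho> > 0" "\<forall>i<n. u $ i > 0" "perron_eigenvector n (sign_conj_mat n J B) \<rho> u"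
    by (auto simp: sign_conj_mat_def)
  moreover have "sgnJ J i * sign_scale_vec n J u $ i = u $ i" if "i < n" for i
    using that by (simp add: sign_scale_vec_def mult.assoc[symmetric])
  ultimately show ?thesis using perron_eigenvector_sign_conj[OF _ B] by metis
qed

section \<open>Algebraically simple eigenvalues\<close>

lemma kernel_dim_le_1I:
  fixes M :: "'a::field mat"
  assumes M: "M \<in> carrier_mat n n" and x: "x \<in> mat_kernel M"
    and span: "\<And>z. z \<in> mat_kernel M \<Longrightarrow> \<exists>a. z = a \<cdot>\<^sub>v x"
  shows "kernel_dim M \<le> 1"
proof -
  interpret K: kernel n n M by (unfold_locales, rule M)
  have "K.span {x} = mat_kernel M"
  proof
    show "K.span {x} \<subseteq> mat_kernel M" using x by (intro K.Ker.span_is_subset2) auto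
    have "submodule class_ring (K.span {x}) K.VK" using x by (intro K.Ker.span_is_submodule) auto
    moreover have "x \<in> K.span {x}" using x K.Ker.in_own_span[of "{x}"] by auto
    ultimately show "mat_kernel M \<subseteq> K.span {x}"
      using span submodule.smult_closed by (fastforce simp: class_ring_simps)
  qed
  from K.Ker.dim_le1I[OF this] x M show ?thesis by auto
qed

lemma kernel_dim_le_1D:
  fixes M :: "'a::field mat"
  assumes M: "M \<in> carrier_mat n n" and x: "x \<in> mat_kernel M" "x \<noteq> 0\<^sub>v n"
    and v: "v \<in> mat_kernel M" and dim: "kernel_dim M \<le> 1"
  shows "\<exists>a. v = a \<cdot>\<^sub>v x"
proof -
  interpret K: kernel n n M by (unfold_locales, rule M)
  from kernel_basis_exists[OF M] obtain B where "finite B" "K.basis B" by auto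
  hence fin: "K.Ker.fin_dim" unfolding K.Ker.fin_dim_def K.Ker.basis_def by auto
  have x_span: "x \<notin> K.span {}" using x K.Ker.span_empty by auto
  hence indep: "K.lin_indpt {x}"
    using K.Ker.lin_dep_iff_in_span[of "{}" x] x by (auto simp: K.Ker.lin_dep_def)
  have "v \<in> K.span {x}"
  proof (rule ccontr)
    assume v_span: "v \<notin> K.span {x}"
    hence "v \<noteq> x" using x K.Ker.in_own_span[of "{x}"] by auto
    with K.Ker.lin_dep_iff_in_span[of "{x}" v] x v indep v_span
    have "K.lin_indpt ({x} \<union> {v})" by auto
    from K.Ker.li_le_dim(2)[OF fin _ this] x v have "card ({x} \<union> {v}) \<le> K.dim" by auto
    with \<open>v \<noteq> x\<close> dim M show False by auto
  qed
  hence "v \<in> K.NC.span {x}" using K.span_same[of "{x}"] x by auto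
  then obtain a where "v = K.NC.lincomb a {x}"
    using K.NC.finite_span[of "{x}"] x M by (auto simp: mat_kernel_def)
  hence "v = a x \<cdot>\<^sub>v x" using x M by (simp add: K.NC.lincomb_def mat_kernel_def)
  thus ?thesis by blast
qed

lemma min_sum_list_le_sum_list_min:
  fixes ns :: "nat list"
  shows "min k (sum_list ns) \<le> sum_list (map (min k) ns)"
  by (induct ns) auto

lemma dim_gen_eigenspace_order_bounds:
  fixes M :: "complex mat"
  assumes M: "M \<in> carrier_mat n n"
  shows "dim_gen_eigenspace M c k \<le> Polynomial.order c (char_poly M)"
    and "min k (Polynomial.order c (char_poly M)) \<le> dim_gen_eigenspace M c k"
proof -
  from char_poly_factorized[OF M] obtain as where "char_poly M = (\<Prod>a\<leftarrow>as. [:- a, 1:])" by auto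
  from jordan_nf_exists[OF M this] obtain n_as where jnf: "jordan_nf M n_as" by auto
  define ns where "ns = map fst (filter (\<lambda>na. snd na = c) n_as)"
  have order: "Polynomial.order c (char_poly M) = sum_list ns"
    unfolding ns_def by (rule jordan_nf_order[OF jnf])
  have "[(n, e)\<leftarrow>n_as . e = c] = filter (\<lambda>na. snd na = c) n_as" by (rule filter_cong) auto
  hence dim: "dim_gen_eigenspace M c k = sum_list (map (min k) ns)"
    unfolding dim_gen_eigenspace[OF jnf] ns_def by (simp add: o_def)
  show "dim_gen_eigenspace M c k \<le> Polynomial.order c (char_poly M)"
    unfolding dim order by (induct ns) auto
  show "min k (Polynomial.order c (char_poly M)) \<le> dim_gen_eigenspace M c k"
    unfolding dim order by (rule min_sum_list_le_sum_list_min)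
qed

lemma order_of_real:
  "Polynomial.order (complex_of_real x) (map_poly complex_of_real f) = Polynomial.order x f"
proof -
  interpret map_poly_inj_idom_divide_hom complex_of_real by unfold_locales auto
  show ?thesis by (rule order_hom)
qed

lemma char_matrix_mult_vec:
  fixes M :: "'a::field mat"
  assumes M: "M \<in> carrier_mat n n" and z: "z \<in> carrier_vec n"
  shows "char_matrix M e *\<^sub>v z = M *\<^sub>v z - e \<cdot>\<^sub>v z"
  using M z by (intro eq_vecI)
    (auto simp: char_matrix_def add_mult_distrib_mat_vec smult_mat_mult_vec)

lemma mat_kernel_char_matrix:
  fixes M :: "'a::field mat"
  assumes M: "M \<in> carrier_mat n n"
  shows "z \<in> mat_kernel (char_matrix M e) \<longleftrightarrow> z \<in> carrier_vec n \<and> M *\<^sub>v z = e \<cdot>\<^sub>v z"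
proof -
  have C: "char_matrix M e \<in> carrier_mat n n" using M by simp
  have "M *\<^sub>v z - e \<cdot>\<^sub>v z = 0\<^sub>v n \<longleftrightarrow> M *\<^sub>v z = e \<cdot>\<^sub>v z" if "z \<in> carrier_vec n"
    using M that by (auto simp: vec_eq_iff)
  thus ?thesis using C M by (auto simp: mat_kernel[OF C] char_matrix_mult_vec)
qed

lemma mat_kernel_char_matrix_pow_2:
  fixes M :: "'a::field mat"
  assumes M: "M \<in> carrier_mat n n"
  shows "z \<in> mat_kernel (char_matrix M e ^\<^sub>m 2) \<longleftrightarrow>
    z \<in> carrier_vec n \<and> M *\<^sub>v (M *\<^sub>v z - e \<cdot>\<^sub>v z) = e \<cdot>\<^sub>v (M *\<^sub>v z - e \<cdot>\<^sub>v z)"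
proof -
  have C: "char_matrix M e \<in> carrier_mat n n" using M by simp
  have "char_matrix M e ^\<^sub>m 2 = char_matrix M e * char_matrix M e" using C
    by (simp add: numeral_2_eq_2)
  hence "z \<in> mat_kernel (char_matrix M e ^\<^sub>m 2) \<longleftrightarrow>
      z \<in> carrier_vec n \<and> char_matrix M e *\<^sub>v z \<in> mat_kernel (char_matrix M e)"
    using C assoc_mult_mat_vec[OF C C] by (auto simp: mat_kernel_def)
  also have "\<dots> \<longleftrightarrow> z \<in> carrier_vec n \<and> M *\<^sub>v (M *\<^sub>v z - e \<cdot>\<^sub>v z) = e \<cdot>\<^sub>v (M *\<^sub>v z - e \<cdot>\<^sub>v z)"
    using M by (auto simp: mat_kernel_char_matrix char_matrix_mult_vec)
  finally show ?thesis .
qed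

lemma eigenspace_span_if_order_char_poly_1:
  fixes M :: "complex mat"
  assumes M: "M \<in> carrier_mat n n" and order: "Polynomial.order c (char_poly M) = 1"
    and x: "x \<in> carrier_vec n" "x \<noteq> 0\<^sub>v n" "M *\<^sub>v x = c \<cdot>\<^sub>v x"
    and v: "v \<in> carrier_vec n" "M *\<^sub>v v = c \<cdot>\<^sub>v v"
  shows "\<exists>a. v = a \<cdot>\<^sub>v x"
proof -
  have "dim_gen_eigenspace M c 1 = kernel_dim (char_matrix M c)"
    using M by (simp add: dim_gen_eigenspace_def)
  hence "kernel_dim (char_matrix M c) \<le> 1"
    using dim_gen_eigenspace_order_bounds(1)[OF M, of c 1] order by simp
  from kernel_dim_le_1D[OF _ _ x(2) _ this] M x v show ?thesis
    by (simp add: mat_kernel_char_matrix)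
qed

text \<open>A Jordan chain \<open>M z - c z = a x\<close> is impossible, since the left eigenvector \<open>y\<close>
  annihilates the left-hand side but not \<open>x\<close>.\<close>

lemma order_char_poly_eq_1I:
  fixes M :: "complex mat"
  assumes M: "M \<in> carrier_mat n n"
    and x: "x \<in> carrier_vec n" "x \<noteq> 0\<^sub>v n" "M *\<^sub>v x = c \<cdot>\<^sub>v x"
    and y: "y \<in> carrier_vec n" "transpose_mat M *\<^sub>v y = c \<cdot>\<^sub>v y" "y \<bullet> x \<noteq> 0"
    and eigenspace: "\<And>v. v \<in> carrier_vec n \<Longrightarrow> M *\<^sub>v v = c \<cdot>\<^sub>v v \<Longrightarrow> \<exists>a. v = a \<cdot>\<^sub>v x"
  shows "Polynomial.order c (char_poly M) = 1"
proof -
  have "eigenvalue M c" using x M by (auto simp: eigenvalue_def eigenvector_def)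
  hence "poly (char_poly M) c = 0" using eigenvalue_root_char_poly[OF M] by simp
  moreover have "char_poly M \<noteq> 0" using degree_monic_char_poly[OF M] by auto
  ultimately have order_pos: "Polynomial.order c (char_poly M) \<noteq> 0" using order_root by blast
  have C2: "char_matrix M c ^\<^sub>m 2 \<in> carrier_mat n n" using M by simp
  have "kernel_dim (char_matrix M c ^\<^sub>m 2) \<le> 1"
  proof (rule kernel_dim_le_1I[OF C2])
    have "M *\<^sub>v x - c \<cdot>\<^sub>v x = 0\<^sub>v n" using x by simp
    moreover have "M *\<^sub>v 0\<^sub>v n = c \<cdot>\<^sub>v 0\<^sub>v n" using M by (intro eq_vecI) auto
    ultimately show "x \<in> mat_kernel (char_matrix M c ^\<^sub>m 2)"
      using x M by (simp add: mat_kernel_char_matrix_pow_2)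
    fix z assume "z \<in> mat_kernel (char_matrix M c ^\<^sub>m 2)"
    hence z: "z \<in> carrier_vec n"
      and chain: "M *\<^sub>v (M *\<^sub>v z - c \<cdot>\<^sub>v z) = c \<cdot>\<^sub>v (M *\<^sub>v z - c \<cdot>\<^sub>v z)"
      using M by (auto simp: mat_kernel_char_matrix_pow_2)
    define t where "t = M *\<^sub>v z - c \<cdot>\<^sub>v z"
    have t: "t \<in> carrier_vec n" using M z by (simp add: t_def)
    obtain a where a: "t = a \<cdot>\<^sub>v x" using eigenspace[OF t chain[folded t_def]] by blast
    have "y \<bullet> t = (transpose_mat M *\<^sub>v y) \<bullet> z - c * (y \<bullet> z)"
      using M y(1) z by (simp add: t_def scalar_prod_minus_distrib transpose_vec_mult_scalar)
    also have "\<dots> = 0" using y z by simp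
    finally have "a * (y \<bullet> x) = 0" using a x y(1) by simp
    hence "t = 0\<^sub>v n" using a x(1) y(3) by (auto simp: vec_eq_iff)
    hence "M *\<^sub>v z = c \<cdot>\<^sub>v z" using M z by (auto simp: t_def vec_eq_iff)
    then show "\<exists>a. z = a \<cdot>\<^sub>v x" using eigenspace[OF z] by blast
  qed
  with dim_gen_eigenspace_order_bounds(2)[OF M, of 2 c] order_pos show ?thesis
    unfolding dim_gen_eigenspace_def by linarith
qed

section \<open>Signature equality implies eventual sign symmetry\<close>

lemma pow_mat_add_orthogonal_idempotent:
  fixes N P :: "'a::comm_ring_1 mat"
  assumes N: "N \<in> carrier_mat n n" and P: "P \<in> carrier_mat n n"
    and NP: "N * P = 0\<^sub>m n n" and PN: "P * N = 0\<^sub>m n n" and PP: "P * P = P"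
  shows "(N + c \<cdot>\<^sub>m P) ^\<^sub>m Suc k = N ^\<^sub>m Suc k + c ^ Suc k \<cdot>\<^sub>m P"
proof (induct k)
  case (Suc k)
  have Nk: "N ^\<^sub>m Suc k \<in> carrier_mat n n" by (rule pow_carrier_mat[OF N])
  have cP: "c ^ Suc k \<cdot>\<^sub>m P \<in> carrier_mat n n" "c \<cdot>\<^sub>m P \<in> carrier_mat n n" using P by auto
  have "N ^\<^sub>m Suc k * P = N ^\<^sub>m k * (N * P)"
    using assoc_mult_mat[OF pow_carrier_mat[OF N] N P] by simp
  also have "\<dots> = 0\<^sub>m n n" using NP N by simp
  finally have "N ^\<^sub>m Suc k * (c \<cdot>\<^sub>m P) = 0\<^sub>m n n" using mult_smult_distrib[OF Nk P] by simp
  moreover have "(c ^ Suc k \<cdot>\<^sub>m P) * N = 0\<^sub>m n n" using mult_smult_assoc_mat[OF P N] PN by simp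
  moreover have "(c ^ Suc k \<cdot>\<^sub>m P) * (c \<cdot>\<^sub>m P) = c ^ Suc (Suc k) \<cdot>\<^sub>m P"
    using mult_smult_assoc_mat[OF P cP(2)] mult_smult_distrib[OF P P] PP P
    by (auto intro!: eq_matI)
  moreover have "(N + c \<cdot>\<^sub>m P) ^\<^sub>m Suc (Suc k) = (N ^\<^sub>m Suc k + c ^ Suc k \<cdot>\<^sub>m P) * (N + c \<cdot>\<^sub>m P)"
    by (subst pow_mat.simps(2), subst Suc, rule refl)
  moreover have "\<dots> = N ^\<^sub>m Suc k * N + N ^\<^sub>m Suc k * (c \<cdot>\<^sub>m P)
        + ((c ^ Suc k \<cdot>\<^sub>m P) * N + (c ^ Suc k \<cdot>\<^sub>m P) * (c \<cdot>\<^sub>m P))"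
    using N P by (simp only: add_mult_distrib_mat[OF Nk cP(1), of _ n] add_carrier_mat
        mult_add_distrib_mat[OF Nk N cP(2)] mult_add_distrib_mat[OF cP(1) N cP(2)] smult_carrier_mat)
  ultimately show ?case using N P Nk by (auto intro!: eq_matI)
qed (use N P in \<open>auto intro!: eq_matI\<close>)

definition spectral_projector :: "nat \<Rightarrow> real vec \<Rightarrow> real vec \<Rightarrow> real mat" where
  "spectral_projector n x y = mat n n (\<lambda>(i,j). x $ i * y $ j / (y \<bullet> x))"

lemma spectral_projector_mult:
  fixes A :: "real mat"
  assumes A: "A \<in> carrier_mat n n" and x: "x \<in> carrier_vec n" "A *\<^sub>v x = c \<cdot>\<^sub>v x"
    and y: "y \<in> carrier_vec n" "transpose_mat A *\<^sub>v y = c \<cdot>\<^sub>v y" and yx: "y \<bullet> x \<noteq> 0"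
  defines "P \<equiv> spectral_projector n x y"
  shows "A * P = c \<cdot>\<^sub>m P" "P * A = c \<cdot>\<^sub>m P" "P * P = P" "P *\<^sub>v x = x"
proof -
  have P: "P \<in> carrier_mat n n" by (simp add: P_def spectral_projector_def)
  have P_ij: "P $$ (i,j) = x $ i * y $ j / (y \<bullet> x)" if "i < n" "j < n" for i j
    using that by (simp add: P_def spectral_projector_def)
  have yx_sum: "y \<bullet> x = (\<Sum>l<n. x $ l * y $ l)"
    using x(1) by (simp add: scalar_prod_def atLeast0LessThan mult.commute)
  have Ax: "(\<Sum>l<n. A $$ (i,l) * x $ l) = c * x $ i" if "i < n" for i
    using arg_cong[OF x(2), of "\<lambda>v. v $ i"] index_mult_mat_vec_sum[OF A x(1) that] that x(1) by simp
  have Ay: "(\<Sum>l<n. A $$ (l,j) * y $ l) = c * y $ j" if "j < n" for j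
    using arg_cong[OF y(2), of "\<lambda>v. v $ j"] index_mult_mat_vec_sum[OF _ y(1) that, of "transpose_mat A"]
      that y(1) A by simp
  show "A * P = c \<cdot>\<^sub>m P"
  proof (rule eq_matI)
    fix i j assume "i < dim_row (c \<cdot>\<^sub>m P)" "j < dim_col (c \<cdot>\<^sub>m P)"
    hence ij: "i < n" "j < n" using P by auto
    have "(A * P) $$ (i,j) = (\<Sum>l<n. A $$ (i,l) * x $ l) * y $ j / (y \<bullet> x)"
      using index_mult_mat_sum[OF A P ij] ij
      by (simp add: P_ij sum_distrib_right sum_divide_distrib mult.assoc)
    then show "(A * P) $$ (i,j) = (c \<cdot>\<^sub>m P) $$ (i,j)" using Ax[OF ij(1)] ij P by (simp add: P_ij)
  qed (use A P in auto)
  show "P * A = c \<cdot>\<^sub>m P"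
  proof (rule eq_matI)
    fix i j assume "i < dim_row (c \<cdot>\<^sub>m P)" "j < dim_col (c \<cdot>\<^sub>m P)"
    hence ij: "i < n" "j < n" using P by auto
    have "(P * A) $$ (i,j) = x $ i * (\<Sum>l<n. A $$ (l,j) * y $ l) / (y \<bullet> x)"
      using index_mult_mat_sum[OF P A ij] ij
      by (simp add: P_ij sum_distrib_left sum_divide_distrib algebra_simps)
    then show "(P * A) $$ (i,j) = (c \<cdot>\<^sub>m P) $$ (i,j)" using Ay[OF ij(2)] ij P by (simp add: P_ij)
  qed (use A P in auto)
  show "P * P = P"
  proof (rule eq_matI)
    fix i j assume "i < dim_row P" "j < dim_col P"
    hence ij: "i < n" "j < n" using P by auto
    have "(P * P) $$ (i,j) = x $ i * y $ j * (y \<bullet> x) / ((y \<bullet> x) * (y \<bullet> x))"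
      using index_mult_mat_sum[OF P P ij] ij
      by (simp add: P_ij yx_sum sum_distrib_left sum_distrib_right sum_divide_distrib algebra_simps)
    then show "(P * P) $$ (i,j) = P $$ (i,j)" using yx ij by (simp add: P_ij)
  qed (use P in auto)
  show "P *\<^sub>v x = x"
  proof (rule eq_vecI)
    fix i assume "i < dim_vec x"
    hence i: "i < n" using x by simp
    have "(P *\<^sub>v x) $ i = x $ i * (y \<bullet> x) / (y \<bullet> x)"
      using index_mult_mat_vec_sum[OF P x(1) i] i
      by (simp add: P_ij yx_sum sum_distrib_left sum_divide_distrib algebra_simps)
    then show "(P *\<^sub>v x) $ i = x $ i" using yx by simp
  qed (use P x in auto)
qed

lemma deflated_mat_eigenvalues_below:
  fixes A N P :: "real mat"
  assumes A: "A \<in> carrier_mat n n" and N: "N \<in> carrier_mat n n" and P: "P \<in> carrier_mat n n"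
    and A_eq: "A = N + c \<cdot>\<^sub>m P" and PN: "P * N = 0\<^sub>m n n"
    and x: "x \<in> carrier_vec n" "x \<noteq> 0\<^sub>v n" "A *\<^sub>v x = c \<cdot>\<^sub>v x" "P *\<^sub>v x = x"
    and c: "c > 0" and order: "Polynomial.order c (char_poly A) = 1"
    and dominant: "\<And>\<mu>. eigenvalue (map_mat complex_of_real A) \<mu> \<Longrightarrow> \<mu> \<noteq> complex_of_real c
      \<Longrightarrow> cmod \<mu> < c"
    and \<mu>: "eigenvalue (map_mat complex_of_real N) \<mu>"
  shows "cmod \<mu> < c"
proof (cases "\<mu> = 0")
  case False
  define Ac Nc Pc where "Ac = map_mat complex_of_real A" and "Nc = map_mat complex_of_real N"
    and "Pc = map_mat complex_of_real P"
  have carr: "Ac \<in> carrier_mat n n" "Nc \<in> carrier_mat n n" "Pc \<in> carrier_mat n n"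
    using A N P by (simp_all add: Ac_def Nc_def Pc_def)
  obtain v where v: "v \<in> carrier_vec n" "v \<noteq> 0\<^sub>v n" "Nc *\<^sub>v v = \<mu> \<cdot>\<^sub>v v"
    using \<mu> N by (auto simp: Nc_def eigenvalue_def eigenvector_def)
  text \<open>Since \<open>P N = 0\<close>, an eigenvector of \<open>N\<close> for \<open>\<mu> \<noteq> 0\<close> lies in the kernel of \<open>P\<close>,
    so it is an eigenvector of \<open>A\<close> for \<open>\<mu>\<close> as well.\<close>
  have "\<mu> \<cdot>\<^sub>v (Pc *\<^sub>v v) = Pc *\<^sub>v (Nc *\<^sub>v v)" using mult_mat_vec[OF carr(3) v(1)] v(3) by simp
  also have "\<dots> = (Pc * Nc) *\<^sub>v v" using assoc_mult_mat_vec[OF carr(3,2) v(1)] by simp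
  also have "Pc * Nc = map_mat complex_of_real (P * N)"
    unfolding Pc_def Nc_def by (rule of_real_hom.mat_hom_mult[OF P N, symmetric])
  also have "map_mat complex_of_real (P * N) *\<^sub>v v = 0\<^sub>v n"
    using PN v(1) by (intro eq_vecI) (auto simp: scalar_prod_def)
  finally have Pv: "Pc *\<^sub>v v = 0\<^sub>v n" using False carr(3) by (auto simp: vec_eq_iff)
  have "Ac = Nc + complex_of_real c \<cdot>\<^sub>m Pc"
    using A_eq N P by (auto intro!: eq_matI simp: Ac_def Nc_def Pc_def)
  hence Av: "Ac *\<^sub>v v = \<mu> \<cdot>\<^sub>v v"
    using carr v Pv by (auto simp: add_mult_distrib_mat_vec smult_mat_mult_vec vec_eq_iff)
  show ?thesis
  proof (cases "\<mu> = complex_of_real c")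
    case False
    have "eigenvalue Ac \<mu>" using Av v carr by (auto simp: eigenvalue_def eigenvector_def)
    then show ?thesis using dominant False by (simp add: Ac_def)
  next
    case True
    define xc where "xc = map_vec complex_of_real x"
    have xc: "xc \<in> carrier_vec n" "xc \<noteq> 0\<^sub>v n" "Ac *\<^sub>v xc = complex_of_real c \<cdot>\<^sub>v xc"
      "Pc *\<^sub>v xc = xc"
      using x of_real_mult_mat_vec_eigen[OF A x(1,3)] of_real_hom.mult_mat_vec_hom[OF P x(1), symmetric]
      by (simp_all add: xc_def Ac_def Pc_def of_real_vec_eq_zero_iff)
    have "Polynomial.order (complex_of_real c) (char_poly Ac) = 1"
      using order by (simp add: Ac_def of_real_hom.char_poly_hom[OF A] order_of_real)
    from eigenspace_span_if_order_char_poly_1[OF carr(1) this xc(1-3) v(1)] Av True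
    obtain a where "v = a \<cdot>\<^sub>v xc" by auto
    with Pv xc carr(3) have "v = 0\<^sub>v n" by (simp add: mult_mat_vec)
    with v(2) show ?thesis by contradiction
  qed
qed (use c in simp)

lemma spectral_projector_sign_pattern:
  fixes x y :: "real vec"
  assumes n: "n > 0" and x: "x \<in> carrier_vec n" and y: "y \<in> carrier_vec n"
    and signs: "\<And>i. i < n \<Longrightarrow> x $ i \<noteq> 0 \<and> sgn (x $ i) = sgn (y $ i)"
  shows "y \<bullet> x > 0"
    and "strictly_J_sign_symmetric n {i. i < n \<and> x $ i > 0} (spectral_projector n x y)"
proof -
  have xy: "x $ i * y $ i > 0" if "i < n" for i
    using signs[OF that] by (auto simp: sgn_if zero_less_mult_iff split: if_splits)
  show yx: "y \<bullet> x > 0"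
    using xy x y n by (auto simp: scalar_prod_def mult.commute intro!: sum_pos)
  have signs_mult: "x $ i * y $ j > 0 \<longleftrightarrow> (x $ i > 0 \<longleftrightarrow> x $ j > 0)" "x $ i * y $ j \<noteq> 0"
    if "i < n" "j < n" for i j
    using signs[OF that(1)] signs[OF that(2)] by (auto simp: sgn_if zero_less_mult_iff split: if_splits)
  show "strictly_J_sign_symmetric n {i. i < n \<and> x $ i > 0} (spectral_projector n x y)"
    unfolding strictly_J_sign_symmetric_def
  proof (intro conjI allI impI)
    fix i j assume ij: "i < n" "j < n"
    have P_ij: "spectral_projector n x y $$ (i,j) = x $ i * y $ j / (y \<bullet> x)"
      using ij by (simp add: spectral_projector_def)
    show "spectral_projector n x y $$ (i,j) > 0"
      if "(i \<in> {i. i < n \<and> x $ i > 0}) = (j \<in> {i. i < n \<and> x $ i > 0})"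
      using that ij signs_mult[OF ij] yx by (simp add: P_ij)
    show "spectral_projector n x y $$ (i,j) < 0"
      if "(i \<in> {i. i < n \<and> x $ i > 0}) \<noteq> (j \<in> {i. i < n \<and> x $ i > 0})"
    proof -
      have "x $ i * y $ j < 0" using that ij signs_mult[OF ij] by (auto simp: not_less less_le)
      then show ?thesis using yx by (simp add: P_ij divide_neg_pos)
    qed
  qed auto
qed

lemma eventually_SJS_if_pow_close:
  fixes A P :: "real mat"
  assumes P: "strictly_J_sign_symmetric n J P" and t: "0 < t" "t < c"
    and close: "\<And>k i j. k > 0 \<Longrightarrow> i < n \<Longrightarrow> j < n \<Longrightarrow>
      \<bar>(A ^\<^sub>m k) $$ (i,j) - c ^ k * P $$ (i,j)\<bar> \<le> C * t ^ k"
  shows "eventually_SJS n A"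
proof -
  have "\<forall>\<^sub>F k in sequentially. C * t ^ k < c ^ k * \<bar>P $$ (i,j)\<bar>" if ij: "i < n" "j < n" for i j
  proof -
    have "(\<lambda>k. C * (t / c) ^ k) \<longlonglongrightarrow> 0"
      using t by (intro tendsto_mult_right_zero LIMSEQ_power_zero) auto
    moreover have "\<bar>P $$ (i,j)\<bar> > 0" using strictly_J_sign_symmetric_nonzero[OF P ij] by simp
    ultimately have "\<forall>\<^sub>F k in sequentially. C * (t / c) ^ k < \<bar>P $$ (i,j)\<bar>"
      by (rule order_tendstoD(2))
    then show ?thesis
      by eventually_elim (use t in \<open>simp add: power_divide field_simps\<close>)
  qed
  hence "\<forall>\<^sub>F k in sequentially. \<forall>(i,j) \<in> {..<n} \<times> {..<n}. C * t ^ k < c ^ k * \<bar>P $$ (i,j)\<bar>"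
    by (subst eventually_ball_finite_distrib) auto
  moreover have "\<forall>\<^sub>F k in sequentially. k > 0" by (rule eventually_gt_at_top)
  ultimately have "\<forall>\<^sub>F k in sequentially. SJS n (A ^\<^sub>m k)"
  proof eventually_elim
    case (elim k)
    have "strictly_J_sign_symmetric n J (A ^\<^sub>m k)"
    proof (rule strictly_J_sign_symmetric_perturb[OF P])
      fix i j assume ij: "i < n" "j < n"
      have "C * t ^ k < c ^ k * \<bar>P $$ (i,j)\<bar>" using elim(1) ij by blast
      with close[OF elim(2) ij]
      show "\<bar>(A ^\<^sub>m k) $$ (i,j) - c ^ k * P $$ (i,j)\<bar> < c ^ k * \<bar>P $$ (i,j)\<bar>" by linarith
    qed (use t in simp)
    then show ?case by (auto simp: SJS_def)
  qed
  then show ?thesis by (simp add: eventually_SJS_iff_eventually)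
qed

lemma signature_equality_imp_eventually_SJS:
  fixes A :: "real mat"
  assumes A: "A \<in> carrier_mat n n" and n: "n > 0" and se: "signature_equality n A"
  shows "eventually_SJS n A"
proof -
  from se obtain c x y where c: "c > 0" and order: "Polynomial.order c (char_poly A) = 1"
    and dominant: "\<And>\<mu>. eigenvalue (map_mat complex_of_real A) \<mu> \<Longrightarrow> \<mu> \<noteq> complex_of_real c
      \<Longrightarrow> cmod \<mu> < c"
    and x: "x \<in> carrier_vec n" "A *\<^sub>v x = c \<cdot>\<^sub>v x"
    and y: "y \<in> carrier_vec n" "transpose_mat A *\<^sub>v y = c \<cdot>\<^sub>v y"
    and signs: "\<And>i. i < n \<Longrightarrow> x $ i \<noteq> 0 \<and> y $ i \<noteq> 0 \<and> sgn (x $ i) = sgn (y $ i)"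
    unfolding signature_equality_def by blast
  define P where "P = spectral_projector n x y"
  define N where "N = A - c \<cdot>\<^sub>m P"
  have P: "P \<in> carrier_mat n n" by (simp add: P_def spectral_projector_def)
  have N: "N \<in> carrier_mat n n" using P by (simp add: N_def minus_carrier_mat)
  have yx: "y \<bullet> x > 0" and P_sjs: "strictly_J_sign_symmetric n {i. i < n \<and> x $ i > 0} P"
    using spectral_projector_sign_pattern[OF n x(1) y(1)] signs by (simp_all add: P_def)
  have AP: "A * P = c \<cdot>\<^sub>m P" and PA: "P * A = c \<cdot>\<^sub>m P" and PP: "P * P = P" and Px: "P *\<^sub>v x = x"
    using spectral_projector_mult[OF A x y, folded P_def] yx by auto
  have NP: "N * P = 0\<^sub>m n n"
    using A P by (simp add: N_def minus_mult_distrib_mat[of _ n n] AP mult_smult_assoc_mat[OF P P] PP)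
  have PN: "P * N = 0\<^sub>m n n"
    using A P by (simp add: N_def mult_minus_distrib_mat[of _ n n] PA mult_smult_distrib[OF P P] PP)
  have A_eq: "A = N + c \<cdot>\<^sub>m P" using A P by (auto simp: N_def intro!: eq_matI)
  have pow: "A ^\<^sub>m k = N ^\<^sub>m k + c ^ k \<cdot>\<^sub>m P" if "k > 0" for k
    using pow_mat_add_orthogonal_idempotent[OF N P NP PN PP, of c "k - 1"] that A_eq by simp
  have "x \<noteq> 0\<^sub>v n" using signs[OF n] n by auto
  from deflated_mat_eigenvalues_below[OF A N P A_eq PN x(1) this x(2) Px c order dominant]
    eigenvalues_below_smaller_bound[of "map_mat complex_of_real N" n c] N c
  obtain t where t: "0 < t" "t < c"
    and ev: "\<And>\<mu>. eigenvalue (map_mat complex_of_real N) \<mu> \<Longrightarrow> cmod \<mu> < t"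
    by auto
  obtain C where C: "\<And>k i j. i < n \<Longrightarrow> j < n \<Longrightarrow> \<bar>(N ^\<^sub>m k) $$ (i,j)\<bar> \<le> C * t ^ k"
    using real_mat_pow_entry_bound[OF N t(1) ev] by blast
  show ?thesis
  proof (rule eventually_SJS_if_pow_close[OF P_sjs t])
    fix k :: nat and i j assume "k > 0" "i < n" "j < n"
    then show "\<bar>(A ^\<^sub>m k) $$ (i,j) - c ^ k * P $$ (i,j)\<bar> \<le> C * t ^ k"
      using pow C N P by simp
  qed
qed

section \<open>Two consecutive SJS powers imply signature equality\<close>

text \<open>Comparing the Perron eigenvalues of \<open>A ^ k\<close> and \<open>A ^ (k + 1)\<close>: the eigenvalue \<open>c\<close> of
  \<open>A\<close> carried by the Perron vector of \<open>A ^ k\<close> dominates the one carried by the Perron vector of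
  \<open>A ^ (k + 1)\<close>, so \<open>c ^ (k + 1)\<close> is the positive Perron eigenvalue of \<open>A ^ (k + 1)\<close>.\<close>

lemma perron_eigenvalue_pos_if_consecutive_powers:
  fixes A :: "real mat"
  assumes A: "A \<in> carrier_mat n n" and k: "k > 0"
    and x: "perron_eigenvector n (A ^\<^sub>m k) \<rho> x" "\<rho> > 0" "x \<noteq> 0\<^sub>v n" "A *\<^sub>v x = c \<cdot>\<^sub>v x"
    and v: "perron_eigenvector n (A ^\<^sub>m (k+1)) \<rho>' v" "\<rho>' > 0" "v \<noteq> 0\<^sub>v n" "A *\<^sub>v v = c' \<cdot>\<^sub>v v"
  shows "c > 0"
proof -
  have Ak: "A ^\<^sub>m k \<in> carrier_mat n n" and Ak1: "A ^\<^sub>m (k+1) \<in> carrier_mat n n" using A by auto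
  note x_carr = perron_eigenvectorD(1)[OF x(1)] and v_carr = perron_eigenvectorD(1)[OF v(1)]
  have ck: "c ^ k = \<rho>" by (rule perron_eigenvector_pow_eigenvalue[OF A x(1,3,4)])
  have c'k1: "c' ^ (k+1) = \<rho>'" by (rule perron_eigenvector_pow_eigenvalue[OF A v(1,3,4)])
  have "eigenvector A v c'" "eigenvector A x c"
    using A x(3,4) v(3,4) x_carr v_carr by (simp_all add: eigenvector_def)
  note pow_v = eigenvector_pow[OF A this(1)] and pow_x = eigenvector_pow[OF A this(2)]
  have "\<bar>c'\<bar> ^ k \<le> \<rho>"
    using perron_eigenvector_real_eigenvalue(1)[OF x(1) Ak v_carr v(3) pow_v] by (simp add: power_abs)
  also have "\<dots> = c ^ k" by (rule ck[symmetric])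
  also have "\<dots> \<le> \<bar>c\<bar> ^ k" using abs_ge_self[of "c ^ k"] by (simp add: power_abs)
  finally have c'_le: "\<bar>c'\<bar> \<le> \<bar>c\<bar>"
    using k by (cases k) (auto intro: power_le_imp_le_base)
  note Y_x = perron_eigenvector_real_eigenvalue[OF v(1) Ak1 x_carr x(3) pow_x]
  have "\<rho>' = c' ^ (k+1)" by (rule c'k1[symmetric])
  also have "\<dots> \<le> \<bar>c' ^ (k+1)\<bar>" by (rule abs_ge_self)
  also have "\<dots> \<le> \<bar>c ^ (k+1)\<bar>" unfolding power_abs by (rule power_mono[OF c'_le]) simp
  finally have "\<bar>c ^ (k+1)\<bar> = \<rho>'" using Y_x(1) by linarith
  hence "c ^ (k+1) = \<rho>'" by (rule Y_x(2))
  hence "c * \<rho> > 0" using ck v(2) by simp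
  thus ?thesis using x(2) by (simp add: zero_less_mult_iff)
qed

lemma perron_power_dominant_eigenvalue:
  fixes A :: "real mat"
  assumes A: "A \<in> carrier_mat n n" and x: "perron_eigenvector n (A ^\<^sub>m k) \<rho> x"
    and x0: "x \<noteq> 0\<^sub>v n" and Ax: "A *\<^sub>v x = c \<cdot>\<^sub>v x" and c: "c > 0"
  shows "\<And>\<mu>. eigenvalue (map_mat complex_of_real A) \<mu> \<Longrightarrow> \<mu> \<noteq> complex_of_real c \<Longrightarrow> cmod \<mu> < c"
    and "\<And>v. v \<in> carrier_vec n \<Longrightarrow> map_mat complex_of_real A *\<^sub>v v = complex_of_real c \<cdot>\<^sub>v v
      \<Longrightarrow> \<exists>a. v = a \<cdot>\<^sub>v map_vec complex_of_real x"
proof -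
  define Ac where "Ac = map_mat complex_of_real A"
  have Ac: "Ac \<in> carrier_mat n n" using A by (simp add: Ac_def)
  have Ac_pow: "map_mat complex_of_real (A ^\<^sub>m k) = Ac ^\<^sub>m k"
    unfolding Ac_def by (rule of_real_hom.mat_hom_pow[OF A])
  have \<rho>: "\<rho> = c ^ k" using perron_eigenvector_pow_eigenvalue[OF A x x0 Ax] by simp
  have x_c: "map_vec complex_of_real x \<in> carrier_vec n"
    "Ac *\<^sub>v map_vec complex_of_real x = complex_of_real c \<cdot>\<^sub>v map_vec complex_of_real x"
    using of_real_mult_mat_vec_eigen[OF A perron_eigenvectorD(1)[OF x] Ax] perron_eigenvectorD(1)[OF x]
    by (simp_all add: Ac_def)
  text \<open>An eigenvector of \<open>A\<close> for \<open>\<mu>\<close> is one of \<open>A ^ k\<close> for \<open>\<mu> ^ k\<close>; if \<open>|\<mu>| \<ge> c\<close> it is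
    therefore peripheral for \<open>A ^ k\<close>, hence a multiple of \<open>x\<close>.\<close>
  have span: "\<exists>a. v = a \<cdot>\<^sub>v map_vec complex_of_real x" "\<mu> = complex_of_real c"
    if v: "v \<in> carrier_vec n" "v \<noteq> 0\<^sub>v n" "Ac *\<^sub>v v = \<mu> \<cdot>\<^sub>v v" and \<mu>: "cmod \<mu> \<ge> c" for v \<mu>
  proof -
    have "eigenvector Ac v \<mu>" using v Ac by (simp add: eigenvector_def)
    from eigenvector_pow[OF Ac this, of k]
    have pow: "map_mat complex_of_real (A ^\<^sub>m k) *\<^sub>v v = \<mu> ^ k \<cdot>\<^sub>v v" by (simp add: Ac_pow)
    have "\<rho> \<le> cmod (\<mu> ^ k)" using \<mu> c by (simp add: \<rho> norm_power power_mono)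
    with perron_eigenvectorD(3)[OF x v(1,2) pow] have "cmod (\<mu> ^ k) = \<rho>" by simp
    from perron_eigenvectorD(5)[OF x v(1,2) pow this]
    show "\<exists>a. v = a \<cdot>\<^sub>v map_vec complex_of_real x" .
    then obtain a where "v = a \<cdot>\<^sub>v map_vec complex_of_real x" by blast
    with x_c Ac have "Ac *\<^sub>v v = complex_of_real c \<cdot>\<^sub>v v"
      by (simp add: mult_mat_vec smult_smult_assoc mult.commute)
    with v(3) have "\<mu> \<cdot>\<^sub>v v = complex_of_real c \<cdot>\<^sub>v v" by simp
    then show "\<mu> = complex_of_real c" by (rule smult_vec_right_cancel[OF v(1,2)])
  qed
  show "cmod \<mu> < c"
    if ev: "eigenvalue (map_mat complex_of_real A) \<mu>" and ne: "\<mu> \<noteq> complex_of_real c" for \<mu>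
  proof (rule ccontr)
    assume "\<not> cmod \<mu> < c"
    moreover obtain v where "eigenvector Ac v \<mu>"
      using ev by (auto simp: Ac_def eigenvalue_def)
    hence "v \<in> carrier_vec n" "v \<noteq> 0\<^sub>v n" "Ac *\<^sub>v v = \<mu> \<cdot>\<^sub>v v"
      using Ac by (simp_all add: eigenvector_def)
    ultimately show False using span(2) ne by simp
  qed
  show "\<exists>a. v = a \<cdot>\<^sub>v map_vec complex_of_real x"
    if "v \<in> carrier_vec n" "map_mat complex_of_real A *\<^sub>v v = complex_of_real c \<cdot>\<^sub>v v" for v
  proof (cases "v = 0\<^sub>v n")
    case True
    then show ?thesis using x_c by (intro exI[of _ 0]) auto
  next
    case False
    with that span(1)[of v "complex_of_real c"] c show ?thesis by (simp add: Ac_def)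
  qed
qed

lemma order_char_poly_eq_1I_real:
  fixes A :: "real mat"
  assumes A: "A \<in> carrier_mat n n"
    and x: "x \<in> carrier_vec n" "x \<noteq> 0\<^sub>v n" "A *\<^sub>v x = c \<cdot>\<^sub>v x"
    and y: "y \<in> carrier_vec n" "transpose_mat A *\<^sub>v y = c \<cdot>\<^sub>v y" "y \<bullet> x \<noteq> 0"
    and eigenspace: "\<And>v. v \<in> carrier_vec n \<Longrightarrow>
      map_mat complex_of_real A *\<^sub>v v = complex_of_real c \<cdot>\<^sub>v v \<Longrightarrow> \<exists>a. v = a \<cdot>\<^sub>v map_vec complex_of_real x"
  shows "Polynomial.order c (char_poly A) = 1"
proof -
  define Ac where "Ac = map_mat complex_of_real A"
  have "Polynomial.order (complex_of_real c) (char_poly Ac) = 1"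
  proof (rule order_char_poly_eq_1I)
    show "Ac \<in> carrier_mat n n" using A by (simp add: Ac_def)
    show "map_vec complex_of_real x \<in> carrier_vec n" "map_vec complex_of_real x \<noteq> 0\<^sub>v n"
      "Ac *\<^sub>v map_vec complex_of_real x = complex_of_real c \<cdot>\<^sub>v map_vec complex_of_real x"
      using x of_real_mult_mat_vec_eigen[OF A x(1,3)] by (simp_all add: Ac_def of_real_vec_eq_zero_iff)
    have "transpose_mat A \<in> carrier_mat n n" using A by simp
    from of_real_mult_mat_vec_eigen[OF this y(1,2)] y(1)
    show "map_vec complex_of_real y \<in> carrier_vec n"
      "transpose_mat Ac *\<^sub>v map_vec complex_of_real y = complex_of_real c \<cdot>\<^sub>v map_vec complex_of_real y"
      by (simp_all add: Ac_def map_mat_transpose)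
    show "map_vec complex_of_real y \<bullet> map_vec complex_of_real x \<noteq> 0"
      using y(3) x(1) y(1) by (simp add: scalar_prod_def flip: of_real_mult of_real_sum)
  qed (use eigenspace in \<open>simp add: Ac_def\<close>)
  then show ?thesis by (simp add: Ac_def of_real_hom.char_poly_hom[OF A] order_of_real)
qed

lemma SJS_pow_perron_eigenvectors:
  fixes A :: "real mat"
  assumes A: "A \<in> carrier_mat n n" and n: "n > 0" and SJS: "SJS n (A ^\<^sub>m k)"
  obtains J \<rho> x y c where "\<rho> > 0" "perron_eigenvector n (A ^\<^sub>m k) \<rho> x"
    "\<And>i. i < n \<Longrightarrow> sgnJ J i * x $ i > 0" "\<And>i. i < n \<Longrightarrow> sgnJ J i * y $ i > 0"
    "y \<in> carrier_vec n" "A *\<^sub>v x = c \<cdot>\<^sub>v x" "transpose_mat A *\<^sub>v y = c \<cdot>\<^sub>v y"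
proof -
  define X where "X = A ^\<^sub>m k"
  have X: "X \<in> carrier_mat n n" and XT: "transpose_mat X \<in> carrier_mat n n"
    and AT: "transpose_mat A \<in> carrier_mat n n" using A by (auto simp: X_def)
  obtain J where J: "strictly_J_sign_symmetric n J X" using SJS by (auto simp: SJS_def X_def)
  obtain \<rho> x where \<rho>: "\<rho> > 0" and x_sign: "\<forall>i<n. sgnJ J i * x $ i > 0"
    and x: "perron_eigenvector n X \<rho> x" using SJS_perron[OF X n J] by blast
  obtain \<rho>' y where \<rho>': "\<rho>' > 0" and y_sign: "\<forall>i<n. sgnJ J i * y $ i > 0"
    and y: "perron_eigenvector n (transpose_mat X) \<rho>' y"
    using SJS_perron[OF XT n strictly_J_sign_symmetric_transpose[OF J X]] by blast
  note x_carr = perron_eigenvectorD(1)[OF x] and y_carr = perron_eigenvectorD(1)[OF y]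
  have "x $ i * y $ i > 0" if "i < n" for i
    using x_sign y_sign that by (auto intro: sgnJ_pattern_mult_pos)
  hence yx: "y \<bullet> x > 0"
    using x_carr y_carr n by (auto simp: scalar_prod_def mult.commute intro!: sum_pos)
  obtain c where Ax: "A *\<^sub>v x = c \<cdot>\<^sub>v x"
    using perron_eigenvector_of_commuting[OF A X _ x] pow_mat_commute[OF A, of k] \<rho>
    by (auto simp: X_def)
  have "transpose_mat A * transpose_mat X = transpose_mat X * transpose_mat A"
    using transpose_mult[OF A X] transpose_mult[OF X A] pow_mat_commute[OF A] by (simp add: X_def)
  then obtain d where ATy: "transpose_mat A *\<^sub>v y = d \<cdot>\<^sub>v y"
    using perron_eigenvector_of_commuting[OF AT XT _ y] \<rho>' by auto
  have "d * (y \<bullet> x) = c * (y \<bullet> x)"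
    using transpose_vec_mult_scalar[OF A x_carr y_carr] ATy Ax x_carr y_carr by simp
  hence "transpose_mat A *\<^sub>v y = c \<cdot>\<^sub>v y" using ATy yx by simp
  with \<rho> x x_sign y_sign y_carr Ax show thesis by (intro that[of \<rho> x J y c]) (auto simp: X_def)
qed

lemma SJS_consecutive_powers_imp_signature_equality:
  fixes A :: "real mat"
  assumes A: "A \<in> carrier_mat n n" and n: "n > 0" and k: "k > 0"
    and SJS_k: "SJS n (A ^\<^sub>m k)" and SJS_k1: "SJS n (A ^\<^sub>m (k+1))"
  shows "signature_equality n A"
proof -
  obtain J \<rho> x y c where \<rho>: "\<rho> > 0" and x: "perron_eigenvector n (A ^\<^sub>m k) \<rho> x"
    and x_sign: "\<And>i. i < n \<Longrightarrow> sgnJ J i * x $ i > 0" and y_sign: "\<And>i. i < n \<Longrightarrow> sgnJ J i * y $ i > 0"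
    and y: "y \<in> carrier_vec n" and Ax: "A *\<^sub>v x = c \<cdot>\<^sub>v x" and ATy: "transpose_mat A *\<^sub>v y = c \<cdot>\<^sub>v y"
    using SJS_pow_perron_eigenvectors[OF A n SJS_k] by metis
  obtain J' \<rho>' v c' where \<rho>': "\<rho>' > 0" and v: "perron_eigenvector n (A ^\<^sub>m (k+1)) \<rho>' v"
    and v_sign: "\<And>i. i < n \<Longrightarrow> sgnJ J' i * v $ i > 0" and Av: "A *\<^sub>v v = c' \<cdot>\<^sub>v v"
    using SJS_pow_perron_eigenvectors[OF A n SJS_k1] by metis
  note x_carr = perron_eigenvectorD(1)[OF x]
  have nonzero: "w \<noteq> 0\<^sub>v n" if "\<And>i. i < n \<Longrightarrow> sgnJ J'' i * w $ i > 0" for w J''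
    using that[OF n] n by auto
  have xy: "x $ i * y $ i > 0" if "i < n" for i
    using x_sign y_sign that by (auto intro: sgnJ_pattern_mult_pos)
  have c: "c > 0"
    by (rule perron_eigenvalue_pos_if_consecutive_powers[OF A k x \<rho> nonzero[OF x_sign] Ax
          v \<rho>' nonzero[OF v_sign] Av])
  note dominant = perron_power_dominant_eigenvalue[OF A x nonzero[OF x_sign] Ax c]
  have "y \<bullet> x > 0" using xy x_carr y n by (auto simp: scalar_prod_def mult.commute intro!: sum_pos)
  hence "Polynomial.order c (char_poly A) = 1"
    using order_char_poly_eq_1I_real[OF A x_carr nonzero[OF x_sign] Ax y ATy] dominant(2) by simp
  moreover have "x $ i \<noteq> 0 \<and> y $ i \<noteq> 0 \<and> sgn (x $ i) = sgn (y $ i)" if "i < n" for i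
    using xy[OF that] by (auto simp: zero_less_mult_iff sgn_if)
  ultimately show ?thesis unfolding signature_equality_def
    using c dominant(1) x_carr y Ax ATy by blast
qed

theorem theorem3:
  fixes A :: "real mat" and n :: nat
  assumes "A \<in> carrier_mat n n" and "n > 0"
  shows "(signature_equality n A \<longleftrightarrow> eventually_SJS n A) \<and>
         (eventually_SJS n A \<longleftrightarrow> (\<exists>k>0. SJS n (A ^\<^sub>m k) \<and> SJS n (A ^\<^sub>m (k+1))))"
proof -
  have "\<exists>k>0. SJS n (A ^\<^sub>m k) \<and> SJS n (A ^\<^sub>m (k+1))" if "eventually_SJS n A"
  proof -
    from that obtain k where k: "k > 0" and SJS: "\<And>m. m \<ge> k \<Longrightarrow> SJS n (A ^\<^sub>m m)"
      unfolding eventually_SJS_def by blast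
    then show ?thesis using SJS[of k] SJS[of "k + 1"] by auto
  qed
  then show ?thesis
    using signature_equality_imp_eventually_SJS[OF assms]
      SJS_consecutive_powers_imp_signature_equality[OF assms] by blast
qed

end
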